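(* Let $X$ be a complex Banach space with norm $\|\cdot\|$ and open unit ball $\mathbb{B}$, let $\mathbb{U}$ be the open unit disk in $\mathbb{C}$, and let $\beta\in\mathbb{R}$ with $|\beta|<\frac{\pi}{2}$. Let $g:\mathbb{U}\to\mathbb{C}$ be a biholomorphic function with $g(0)=1$ and $\operatorname{Re} g(z)>0$ for all $z\in\mathbb{U}$. Let $F:\mathbb{B}\to X$ be a holomorphic mapping of one-dimensional type (i.e. $F(x)=f(x)\,x$ for some holomorphic $f:\mathbb{B}\to\mathbb{C}$) such that $F(0)=0$, $DF(0)=I$, $DF(x)$ has a bounded inverse for every $x\in\mathbb{B}$, and $(DF(x))^{-1}F(x)\in\widehat{\mathcal{M}}_g(\beta)$ (the class defined in the context). Then for every $\lambda\in\mathbb{C}$ and every $x\in\mathbb{B}\setminus\{0\}$, \[ \left\|\frac{D^3F(0)(x^3)}{3!}-\lambda\,\frac12\, D^2F(0)\!\left(x,\frac{D^2F(0)(x^2)}{2!}\right)\right\|\le \frac{\|x\|^3}{2}\,\psi_\beta(\lambda)\,|g'(0)|, \] where \[ \psi_\beta(\lambda)=\cos\beta\cdot\max\left\{1,\ \left|(1-2\lambda)\cos\beta\, g'(0)+\frac{e^{i\beta}}{2}\cdot\frac{g''(0)}{g'(0)}\right|\right\}. \] Moreover, this estimate is sharp.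
   Context: $X^*$ denotes the dual space of $X$. For $x\in X\setminus\{0\}$, $T(x)=\{T_x\in X^*:\ \|T_x\|=1,\ T_x(x)=\|x\|\}$ (nonempty by Hahn–Banach). $D^nF(0)$ denotes the $n$-th Fréchet derivative of $F$ at $0$, a bounded symmetric $n$-linear map, and $D^nF(0)(x^n)=D^nF(0)[x,\dots,x]$. With $g$ as in the claim, put $g_\beta(z)=e^{-i\beta}\left(\cos\beta\, g(z)+i\sin\beta\right)$ for $z\in\mathbb{U}$. The class $\widehat{\mathcal{M}}_g(\beta)$ consists of all holomorphic mappings $h:\mathbb{B}\to X$ such that $\frac{\|x\|}{T_x(h(x))}\in g_\beta(\mathbb{U})$ for all $x\in\mathbb{B}\setminus\{0\}$ and all $T_x\in T(x)$. *)

theory Defs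
  imports "HOL-Analysis.Analysis"
begin

text \<open>A complex Banach space is modelled as a real Banach space type together with a
  complex scalar multiplication cs extending the real one and compatible with the norm.\<close>
definition complex_scaling :: "(complex \<Rightarrow> 'a::banach \<Rightarrow> 'a) \<Rightarrow> bool" where
  "complex_scaling cs \<longleftrightarrow>
     (\<forall>r x. cs (complex_of_real r) x = r *\<^sub>R x) \<and>
     (\<forall>a b x. cs (a + b) x = cs a x + cs b x) \<and>
     (\<forall>a x y. cs a (x + y) = cs a x + cs a y) \<and>
     (\<forall>a b x. cs (a * b) x = cs a (cs b x)) \<and>
     (\<forall>a x. norm (cs a x) = cmod a * norm x)"

definition holo_map ::
  "(complex \<Rightarrow> 'a::real_normed_vector \<Rightarrow> 'a) \<Rightarrow> (complex \<Rightarrow> 'b::real_normed_vector \<Rightarrow> 'b)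
    \<Rightarrow> 'a set \<Rightarrow> ('a \<Rightarrow> 'b) \<Rightarrow> bool" where
  "holo_map csA csB S F \<longleftrightarrow> open S \<and>
     (\<forall>x\<in>S. \<exists>D. (F has_derivative D) (at x) \<and> (\<forall>c v. D (csA c v) = csB c (D v)))"

definition support_functional ::
  "(complex \<Rightarrow> 'a::real_normed_vector \<Rightarrow> 'a) \<Rightarrow> 'a \<Rightarrow> ('a \<Rightarrow> complex) \<Rightarrow> bool" where
  "support_functional cs x T \<longleftrightarrow> bounded_linear T \<and> (\<forall>c y. T (cs c y) = c * T y) \<and>
     onorm T = 1 \<and> T x = complex_of_real (norm x)"

definition g_beta :: "(complex \<Rightarrow> complex) \<Rightarrow> real \<Rightarrow> complex \<Rightarrow> complex" where
  "g_beta g \<beta> z = exp (- \<i> * complex_of_real \<beta>) * (complex_of_real (cos \<beta>) * g z + \<i> * complex_of_real (sin \<beta>))"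

definition Mhat :: "(complex \<Rightarrow> 'a::real_normed_vector \<Rightarrow> 'a) \<Rightarrow> (complex \<Rightarrow> complex) \<Rightarrow> real
    \<Rightarrow> ('a \<Rightarrow> 'a) \<Rightarrow> bool" where
  "Mhat cs g \<beta> h \<longleftrightarrow> holo_map cs cs (ball 0 1) h \<and>
     (\<forall>x\<in>ball 0 1 - {0}. \<forall>T. support_functional cs x T \<longrightarrow>
        complex_of_real (norm x) / T (h x) \<in> g_beta g \<beta> ` ball 0 1)"

definition inv_apply :: "('a::real_normed_vector \<Rightarrow>\<^sub>L 'a) \<Rightarrow> 'a \<Rightarrow> 'a" where
  "inv_apply L y = (THE z. blinfun_apply L z = y)"

definition admissible ::
  "(complex \<Rightarrow> 'a::banach \<Rightarrow> 'a) \<Rightarrow> (complex \<Rightarrow> complex) \<Rightarrow> real \<Rightarrow> ('a \<Rightarrow> 'a)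
    \<Rightarrow> ('a \<Rightarrow> ('a \<Rightarrow>\<^sub>L 'a)) \<Rightarrow> ('a \<Rightarrow> ('a \<Rightarrow>\<^sub>L ('a \<Rightarrow>\<^sub>L 'a)))
    \<Rightarrow> ('a \<Rightarrow>\<^sub>L ('a \<Rightarrow>\<^sub>L ('a \<Rightarrow>\<^sub>L 'a))) \<Rightarrow> bool" where
  "admissible cs g \<beta> F DF D2F D3 \<longleftrightarrow>
     holo_map cs cs (ball 0 1) F \<and>
     (\<exists>f. holo_map cs (*) (ball 0 1) f \<and> (\<forall>x\<in>ball 0 1. F x = cs (f x) x)) \<and>
     F 0 = 0 \<and>
     (\<forall>x\<in>ball 0 1. (F has_derivative blinfun_apply (DF x)) (at x)) \<and>
     DF 0 = id_blinfun \<and>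
     (\<forall>x\<in>ball 0 1. \<exists>L. L o\<^sub>L DF x = id_blinfun \<and> DF x o\<^sub>L L = id_blinfun) \<and>
     Mhat cs g \<beta> (\<lambda>x. inv_apply (DF x) (F x)) \<and>
     (\<forall>x\<in>ball 0 1. (DF has_derivative blinfun_apply (D2F x)) (at x)) \<and>
     (D2F has_derivative blinfun_apply D3) (at 0)"

definition psi :: "real \<Rightarrow> (complex \<Rightarrow> complex) \<Rightarrow> complex \<Rightarrow> real" where
  "psi \<beta> g lam = cos \<beta> * max 1
     (cmod ((1 - 2 * lam) * complex_of_real (cos \<beta>) * deriv g 0
            + exp (\<i> * complex_of_real \<beta>) / 2 * (deriv (deriv g) 0 / deriv g 0)))"

definition lhs_expr ::
  "(complex \<Rightarrow> 'a::banach \<Rightarrow> 'a) \<Rightarrow> ('a \<Rightarrow> ('a \<Rightarrow>\<^sub>L ('a \<Rightarrow>\<^sub>L 'a)))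
    \<Rightarrow> ('a \<Rightarrow>\<^sub>L ('a \<Rightarrow>\<^sub>L ('a \<Rightarrow>\<^sub>L 'a))) \<Rightarrow> complex \<Rightarrow> 'a \<Rightarrow> 'a" where
  "lhs_expr cs D2F D3 lam x =
     (1 / fact 3) *\<^sub>R (D3 x x x) - cs (lam / 2) (D2F 0 x ((1 / fact 2) *\<^sub>R (D2F 0 x x)))"

end

theory Submission
  imports Defs "HOL-Complex_Analysis.Complex_Analysis"
begin

(* Write x = r u with norm u = 1. On the complex line through u a mapping of one-dimensional
   type is F (z u) = z k(z) u with k(z) = f (z u), and the second and third Frechet derivatives
   of F at 0, evaluated at x, reduce to Taylor coefficients of k: the left-hand side of the
   estimate equals r^3 |k''(0)/2 - lambda k'(0)^2|.
   Testing the defining condition of the class on support functionals at the points z u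
   (which exist by the Hahn-Banach theorem) shows that (z k)'/k takes its values in g_beta(U);
   since g_beta is univalent, (z k)'/k = g_beta o w for a Schwarz function w. Comparing
   coefficients expresses k'(0) and k''(0) through g'(0), g''(0), w'(0), w''(0), and the
   estimate follows from the Schwarz-Pick bound |w''(0)/2| <= 1 - |w'(0)|^2.
   Equality holds for w(z) = z or w(z) = z^2: solving (z K)' = K (g_beta o w) and putting
   F(x) = K(T x) x for a norming functional T of u gives an admissible mapping. *)

section \<open>Complex scalings\<close>

locale complex_scaled =
  fixes cs :: "complex \<Rightarrow> 'a::banach \<Rightarrow> 'a"
  assumes scaling: "complex_scaling cs"
begin

lemma cs_of_real: "cs (of_real r) x = r *\<^sub>R x"
  and cs_mult: "cs (a * b) x = cs a (cs b x)"
  and norm_cs: "norm (cs a x) = cmod a * norm x"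
  using scaling by (simp_all add: complex_scaling_def)

sublocale cs: bounded_bilinear cs
proof
  show "cs (a + b) x = cs a x + cs b x" "cs a (x + y) = cs a x + cs a y" for a b x y
    using scaling by (simp_all add: complex_scaling_def)
  show "cs (r *\<^sub>R a) x = r *\<^sub>R cs a x" for r a x
    by (simp add: scaleR_conv_of_real cs_mult cs_of_real)
  show "cs a (r *\<^sub>R x) = r *\<^sub>R cs a x" for r a x
    using cs_mult[of a "of_real r" x] cs_mult[of "of_real r" a x] by (simp add: cs_of_real mult.commute)
  show "\<exists>K. \<forall>a x. norm (cs a x) \<le> cmod a * norm x * K"
    by (auto simp: norm_cs intro: exI[of _ 1])
qed

lemma cs_one [simp]: "cs 1 x = x"
  using cs_of_real[of 1] by simp

lemma cs_commute: "cs a (cs b x) = cs b (cs a x)"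
  using cs_mult[of a b x] cs_mult[of b a x] by (simp add: mult.commute)

lemma cs_i_i: "cs \<i> (cs \<i> x) = - x"
  using cs_mult[of \<i> \<i> x] by (simp add: cs.minus_left)

lemma cs_Re_Im: "cs a x = Re a *\<^sub>R x + Im a *\<^sub>R cs \<i> x"
proof -
  have "a = of_real (Re a) + of_real (Im a) * \<i>"
    by (simp add: complex_eq_iff)
  then show ?thesis
    by (metis cs.add_left cs_mult cs_of_real)
qed

end

section \<open>The Hahn-Banach theorem\<close>

(* A real-linear functional on a subspace, dominated by the norm, represented by its graph so
   that Zorn's lemma applies to set inclusion. *)
definition norm_dominated_graph :: "('a::real_normed_vector \<times> real) set \<Rightarrow> bool" where
  "norm_dominated_graph G \<longleftrightarrow>
     (\<forall>x a y b. (x, a) \<in> G \<longrightarrow> (y, b) \<in> G \<longrightarrow> (x + y, a + b) \<in> G) \<and>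
     (\<forall>r x a. (x, a) \<in> G \<longrightarrow> (r *\<^sub>R x, r * a) \<in> G) \<and>
     (\<forall>x a. (x, a) \<in> G \<longrightarrow> a \<le> norm x)"

lemma norm_dominated_graphD:
  assumes "norm_dominated_graph G" and "(x, a) \<in> G"
  shows "(y, b) \<in> G \<Longrightarrow> (x + y, a + b) \<in> G" and "(r *\<^sub>R x, r * a) \<in> G" and "a \<le> norm x"
  using assms unfolding norm_dominated_graph_def by blast+

lemma norm_dominated_graph_unique:
  assumes G: "norm_dominated_graph G" and "(x, a) \<in> G" "(x, b) \<in> G"
  shows "a = b"
proof -
  have "(x + (-1) *\<^sub>R x, a + (-1) * b) \<in> G" "(x + (-1) *\<^sub>R x, b + (-1) * a) \<in> G"
    using assms by (blast intro: norm_dominated_graphD)+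
  then have "a - b \<le> 0" "b - a \<le> 0"
    using norm_dominated_graphD(3)[OF G] by fastforce+
  then show ?thesis by simp
qed

lemma norm_dominated_graph_extension_value:
  assumes G: "norm_dominated_graph G" and "(0, 0) \<in> G"
  obtains c where "\<And>x a. (x, a) \<in> G \<Longrightarrow> a - norm (x - z) \<le> c"
    and "\<And>y b. (y, b) \<in> G \<Longrightarrow> c \<le> norm (y + z) - b"
proof
  have sep: "a - norm (x - z) \<le> norm (y + z) - b" if "(x, a) \<in> G" "(y, b) \<in> G" for x a y b
  proof -
    have "a + b \<le> norm (x + y)"
      using G that unfolding norm_dominated_graph_def by blast
    also have "\<dots> \<le> norm (x - z) + norm (y + z)"
      using norm_triangle_ineq[of "x - z" "y + z"] by simp
    finally show ?thesis by simp
  qed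
  let ?S = "(\<lambda>(x, a). a - norm (x - z)) ` G"
  have "bdd_above ?S"
    using sep[OF _ \<open>(0, 0) \<in> G\<close>] by (intro bdd_aboveI[of _ "norm z"]) auto
  then show "a - norm (x - z) \<le> Sup ?S" if "(x, a) \<in> G" for x a
    using that by (force intro: cSup_upper)
  show "Sup ?S \<le> norm (y + z) - b" if "(y, b) \<in> G" for y b
    using assms sep that by (force intro: cSup_least)
qed

lemma norm_dominated_graph_extension_le:
  assumes G: "norm_dominated_graph G" and "(x, a) \<in> G"
    and lower: "\<And>x a. (x, a) \<in> G \<Longrightarrow> a - norm (x - z) \<le> c"
    and upper: "\<And>y b. (y, b) \<in> G \<Longrightarrow> c \<le> norm (y + z) - b"
  shows "a + t * c \<le> norm (x + t *\<^sub>R z)"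
proof (cases t "0::real" rule: linorder_cases)
  case greater
  have "t * c \<le> t * (norm ((1 / t) *\<^sub>R x + z) - (1 / t) * a)"
    using upper[OF norm_dominated_graphD(2)[OF assms(1,2), of "1 / t"]] greater
    by (simp add: mult_left_mono)
  also have "\<dots> = norm (x + t *\<^sub>R z) - a"
    using greater norm_scaleR[of t "(1 / t) *\<^sub>R x + z"] by (simp add: algebra_simps)
  finally show ?thesis by simp
next
  case less
  have "t * c \<le> t * ((-1 / t) * a - norm ((-1 / t) *\<^sub>R x - z))"
    using lower[OF norm_dominated_graphD(2)[OF assms(1,2), of "-1 / t"]] less
    by (simp add: mult_left_mono_neg)
  also have "\<dots> = norm (x + t *\<^sub>R z) - a"
    using less norm_scaleR[of t "(-1 / t) *\<^sub>R x - z"] norm_minus_cancel[of "x + t *\<^sub>R z"]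
    by (simp add: algebra_simps)
  finally show ?thesis by simp
qed (use norm_dominated_graphD(3)[OF assms(1,2)] in simp)

lemma norm_dominated_graph_extend:
  assumes G: "norm_dominated_graph G" and "(0, 0) \<in> G"
  obtains G' c where "norm_dominated_graph G'" "G \<subseteq> G'" "(z, c) \<in> G'"
proof -
  obtain c where lower: "\<And>x a. (x, a) \<in> G \<Longrightarrow> a - norm (x - z) \<le> c"
    and upper: "\<And>y b. (y, b) \<in> G \<Longrightarrow> c \<le> norm (y + z) - b"
    using norm_dominated_graph_extension_value[OF assms] by blast
  let ?G' = "{(x + t *\<^sub>R z, a + t * c) | x a t. (x, a) \<in> G}"
  have "norm_dominated_graph ?G'"
    unfolding norm_dominated_graph_def
  proof (intro conjI allI impI)
    fix x a
    assume "(x, a) \<in> ?G'"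
    then obtain x1 a1 t where x1: "(x1, a1) \<in> G" and x: "x = x1 + t *\<^sub>R z" and a: "a = a1 + t * c"
      by blast
    show "a \<le> norm x"
      unfolding x a by (rule norm_dominated_graph_extension_le[OF G x1 lower upper])
    have "(r *\<^sub>R x, r * a) = (r *\<^sub>R x1 + (r * t) *\<^sub>R z, r * a1 + (r * t) * c)" for r
      using x a by (simp add: algebra_simps)
    with norm_dominated_graphD(2)[OF G x1] show "(r *\<^sub>R x, r * a) \<in> ?G'" for r
      by blast
    fix y b
    assume "(y, b) \<in> ?G'"
    then obtain y1 b1 s where y1: "(y1, b1) \<in> G" and "y = y1 + s *\<^sub>R z" "b = b1 + s * c"
      by blast
    then have "(x + y, a + b) = ((x1 + y1) + (t + s) *\<^sub>R z, (a1 + b1) + (t + s) * c)"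
      using x a by (simp add: algebra_simps)
    with norm_dominated_graphD(1)[OF G x1 y1] show "(x + y, a + b) \<in> ?G'"
      by blast
  qed
  moreover have "G \<subseteq> ?G'"
  proof (rule subrelI)
    fix x a
    assume "(x, a) \<in> G"
    moreover have "(x, a) = (x + 0 *\<^sub>R z, a + 0 * c)" by simp
    ultimately show "(x, a) \<in> ?G'" by blast
  qed
  moreover have "(0 + 1 *\<^sub>R z, 0 + 1 * c) \<in> ?G'"
    using \<open>(0, 0) \<in> G\<close> by blast
  then have "(z, c) \<in> ?G'"
    by simp
  ultimately show ?thesis
    by (rule that)
qed

lemma norm_dominated_graph_Union:
  assumes "C \<in> chains {G. norm_dominated_graph G}"
  shows "norm_dominated_graph (\<Union>C)"
  unfolding norm_dominated_graph_def
proof (intro conjI allI impI)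
  have good: "\<And>X. X \<in> C \<Longrightarrow> norm_dominated_graph X"
    and chain: "\<And>X Y. X \<in> C \<Longrightarrow> Y \<in> C \<Longrightarrow> X \<subseteq> Y \<or> Y \<subseteq> X"
    using assms unfolding chains_def chain_subset_def by blast+
  fix x a
  assume "(x, a) \<in> \<Union>C"
  then obtain X where X: "X \<in> C" "(x, a) \<in> X"
    by blast
  with good show "(r *\<^sub>R x, r * a) \<in> \<Union>C" "a \<le> norm x" for r
    by (blast dest: norm_dominated_graphD)+
  fix y b
  assume "(y, b) \<in> \<Union>C"
  then obtain Y where Y: "Y \<in> C" "(y, b) \<in> Y"
    by blast
  with X chain[of X Y] good show "(x + y, a + b) \<in> \<Union>C"
    by (blast dest: norm_dominated_graphD)
qed

theorem real_Hahn_Banach: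
  assumes "norm_dominated_graph G" "(0, 0) \<in> G"
  obtains F where "linear F" "\<And>x. F x \<le> norm x" "\<And>x a. (x, a) \<in> G \<Longrightarrow> F x = a"
proof -
  define A where "A = {H. G \<subseteq> H \<and> norm_dominated_graph H}"
  have "\<exists>U\<in>A. \<forall>X\<in>C. X \<subseteq> U" if C: "C \<in> chains A" for C
  proof (cases "C = {}")
    case False
    have "C \<in> chains {G. norm_dominated_graph G}"
      using C unfolding A_def chains_def by blast
    then have "\<Union>C \<in> A"
      using C False norm_dominated_graph_Union unfolding A_def chains_def by blast
    then show ?thesis by blast
  qed (use assms in \<open>auto simp: A_def\<close>)
  then have "\<exists>M\<in>A. \<forall>X\<in>A. M \<subseteq> X \<longrightarrow> X = M"
    by (intro Zorn_Lemma2) blast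
  then obtain M where M: "M \<in> A" and maximal: "\<forall>X\<in>A. M \<subseteq> X \<longrightarrow> X = M"
    by blast
  then have gM: "norm_dominated_graph M" and "G \<subseteq> M"
    unfolding A_def by auto
  have total: "\<exists>c. (z, c) \<in> M" for z
  proof -
    obtain M' c where "norm_dominated_graph M'" "M \<subseteq> M'" "(z, c) \<in> M'"
      using norm_dominated_graph_extend[OF gM] \<open>G \<subseteq> M\<close> assms(2) by blast
    with maximal \<open>G \<subseteq> M\<close> have "(z, c) \<in> M"
      unfolding A_def by blast
    then show ?thesis ..
  qed
  define F where "F x = (SOME c. (x, c) \<in> M)" for x
  have FM: "(x, F x) \<in> M" for x
    unfolding F_def using total by (metis someI_ex)
  have F_eq: "F x = a" if "(x, a) \<in> M" for x a
    using norm_dominated_graph_unique[OF gM FM that] .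
  have "linear F"
  proof
    show "F (x + y) = F x + F y" "F (r *\<^sub>R x) = r *\<^sub>R F x" for r x y
      using F_eq gM FM unfolding norm_dominated_graph_def by auto
  qed
  moreover have "F x \<le> norm x" for x
    using gM FM unfolding norm_dominated_graph_def by blast
  ultimately show ?thesis
    using that F_eq \<open>G \<subseteq> M\<close> by blast
qed

section \<open>Norming functionals\<close>

locale norming_functional = complex_scaled cs for cs :: "complex \<Rightarrow> 'a::banach \<Rightarrow> 'a" +
  fixes T :: "'a \<Rightarrow> complex"
  assumes bounded_linear_T: "bounded_linear T"
    and T_cs: "T (cs a y) = a * T y"
    and norm_T_le: "cmod (T y) \<le> norm y"
begin

sublocale T: bounded_linear T
  by (rule bounded_linear_T)

lemma support_functional_rotate:
  assumes "norm u = 1" "T u = 1" "z \<noteq> 0"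
  shows "support_functional cs (cs z u) (\<lambda>y. cnj z / cmod z * T y)"
  unfolding support_functional_def
proof (intro conjI allI)
  have unimodular: "cmod (cnj z / cmod z) = 1"
    using assms(3) by (simp add: norm_divide)
  show bl: "bounded_linear (\<lambda>y. cnj z / cmod z * T y)"
    by (intro bounded_linear_mult_right[THEN bounded_linear_compose] bounded_linear_T)
  show "cnj z / cmod z * T (cs a y) = a * (cnj z / cmod z * T y)" for a y
    by (simp add: T_cs)
  show at_point: "cnj z / cmod z * T (cs z u) = norm (cs z u)"
    using assms complex_norm_square[of z]
    by (simp add: T_cs norm_cs field_simps power2_eq_square mult.commute)
  have "onorm (\<lambda>y. cnj z / cmod z * T y) \<le> 1"
  proof (rule onorm_bound)
    fix y
    have "cmod (cnj z / cmod z * T y) = cmod (T y)"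
      by (simp only: norm_mult unimodular mult_1)
    then show "norm (cnj z / cmod z * T y) \<le> 1 * norm y"
      using norm_T_le by simp
  qed simp
  moreover have "norm (cnj z / cmod z * T (cs z u)) / norm (cs z u) \<le> onorm (\<lambda>y. cnj z / cmod z * T y)"
    using bl by (rule le_onorm)
  moreover have "norm (cnj z / cmod z * T (cs z u)) / norm (cs z u) = 1"
    unfolding at_point using assms by (simp add: norm_cs)
  ultimately show "onorm (\<lambda>y. cnj z / cmod z * T y) = 1"
    by linarith
qed

end

context complex_scaled
begin

lemma norming_functional_complexify:
  assumes "linear F" and F_le: "\<And>x. F x \<le> norm x"
  shows "norming_functional cs (\<lambda>y. Complex (F y) (- F (cs \<i> y)))"
    (is "norming_functional cs ?T")
proof -
  interpret F: linear F by fact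
  have T_cs: "?T (cs a y) = a * ?T y" for a y
  proof -
    have "cs \<i> (cs a y) = Re a *\<^sub>R cs \<i> y - Im a *\<^sub>R y"
      using cs_Re_Im[of a "cs \<i> y"] cs_commute[of \<i> a y] by (simp add: cs_i_i)
    then have "F (cs \<i> (cs a y)) = Re a * F (cs \<i> y) - Im a * F y"
      by (simp add: F.diff F.scale)
    moreover have "F (cs a y) = Re a * F y + Im a * F (cs \<i> y)"
      by (simp add: cs_Re_Im[of a y] F.add F.scale)
    ultimately show ?thesis
      by (simp add: complex_eq_iff algebra_simps)
  qed
  have norm_T_le: "cmod (?T y) \<le> norm y" for y
  proof (cases "?T y = 0")
    case False
    define a where "a = cnj (?T y) / cmod (?T y)"
    have "a * ?T y = cmod (?T y)"
      unfolding a_def using False complex_norm_square[of "?T y"]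
      by (simp add: field_simps power2_eq_square mult.commute)
    then have "cmod (?T y) = F (cs a y)"
      by (metis Re_complex_of_real T_cs complex.sel(1))
    also have "\<dots> \<le> norm y"
      using F_le[of "cs a y"] False by (simp add: norm_cs a_def norm_divide)
    finally show ?thesis .
  qed simp
  have "bounded_linear ?T"
    by (rule bounded_linear_intro[where K = 1])
      (simp_all add: F.add F.scale cs.add_right cs.scaleR_right complex_eq_iff norm_T_le)
  with T_cs norm_T_le complex_scaled_axioms show ?thesis
    unfolding norming_functional_def norming_functional_axioms_def by blast
qed

lemma norm_dominated_graph_Re_line:
  assumes "norm u = 1"
  shows "norm_dominated_graph {(cs z u, Re z) | z. True}" (is "norm_dominated_graph ?G")
  unfolding norm_dominated_graph_def
proof (intro conjI allI impI)
  fix x a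
  assume "(x, a) \<in> ?G"
  then obtain z where x: "x = cs z u" and a: "a = Re z"
    by blast
  show "a \<le> norm x"
    using complex_Re_le_cmod[of z] assms by (simp add: x a norm_cs)
  have "(r *\<^sub>R x, r * a) = (cs (r *\<^sub>R z) u, Re (r *\<^sub>R z))" for r
    by (simp add: x a cs.scaleR_left)
  then show "(r *\<^sub>R x, r * a) \<in> ?G" for r
    by blast
  fix y b
  assume "(y, b) \<in> ?G"
  then obtain w where "y = cs w u" "b = Re w"
    by blast
  then have "(x + y, a + b) = (cs (z + w) u, Re (z + w))"
    by (simp add: x a cs.add_left)
  then show "(x + y, a + b) \<in> ?G"
    by blast
qed

theorem norming_functional_exists:
  assumes "norm u = 1"
  obtains T where "norming_functional cs T" "T u = 1"
proof -
  have "(0, 0) = (cs 0 u, Re 0)"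
    by (simp add: cs.zero_left)
  then have "(0, 0) \<in> {(cs z u, Re z) | z. True}"
    by blast
  with norm_dominated_graph_Re_line[OF assms]
  obtain F where F: "linear F" "\<And>x. F x \<le> norm x" and F_G: "\<And>z. F (cs z u) = Re z"
    by (rule real_Hahn_Banach) blast
  from F have "norming_functional cs (\<lambda>y. Complex (F y) (- F (cs \<i> y)))"
    by (rule norming_functional_complexify)
  moreover have "Complex (F u) (- F (cs \<i> u)) = 1"
    using F_G[of 1] F_G[of \<i>] by (simp add: complex_eq_iff)
  ultimately show ?thesis
    using that by blast
qed

end

section \<open>Holomorphic self-maps of the disc\<close>

lemma deriv_eq_on_open:
  assumes "open S" "x \<in> S" "\<And>y. y \<in> S \<Longrightarrow> f y = g y"
  shows "deriv f x = deriv g x"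
  using assms by (intro deriv_cong_ev eventually_mono[OF eventually_nhds_in_open]) auto

lemma Schwarz_Pick_deriv_0:
  assumes holf: "f holomorphic_on ball 0 1" and f_in: "\<And>z. z \<in> ball 0 1 \<Longrightarrow> f z \<in> ball 0 1"
  shows "cmod (deriv f 0) \<le> 1 - (cmod (f 0))\<^sup>2"
proof -
  define a where "a = f 0"
  have a: "cmod a < 1"
    using f_in[of 0] by (simp add: a_def)
  define v where "v = Moebius_function 0 a \<circ> f"
  have holv: "v holomorphic_on ball 0 1"
    unfolding v_def using f_in
    by (intro holomorphic_on_compose_gen[OF holf Moebius_function_holomorphic[OF a]]) auto
  have "v 0 = 0"
    by (simp add: v_def a_def Moebius_function_eq_zero)
  moreover have "norm (v z) < 1" if "norm z < 1" for z
    using Moebius_function_norm_lt_1[OF a] f_in that by (simp add: v_def)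
  ultimately have "cmod (deriv v 0) \<le> 1"
    using Schwarz_Lemma(2)[OF holv, of 0] by simp
  have aa: "1 - cnj a * a = of_real (1 - (cmod a)\<^sup>2)"
    using complex_norm_square[of a] by (simp add: mult.commute)
  have pos: "1 - (cmod a)\<^sup>2 > 0"
    using a by (simp add: power_less_one_iff abs_square_less_1)
  have nz: "1 - cnj a * a \<noteq> 0"
    unfolding aa using pos by (simp only: of_real_eq_0_iff)
  have "((\<lambda>z. (z - a) / (1 - cnj a * z)) has_field_derivative
      (1 * (1 - cnj a * a) - (a - a) * (- cnj a * 1)) / (1 - cnj a * a)\<^sup>2) (at a)"
    using nz by (auto intro!: derivative_eq_intros simp: power2_eq_square)
  then have "(Moebius_function 0 a has_field_derivative 1 / (1 - cnj a * a)) (at a)"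
    using nz by (simp add: Moebius_function_simple[abs_def] power2_eq_square)
  then have "(v has_field_derivative 1 / (1 - cnj a * a) * deriv f 0) (at 0)"
    unfolding v_def a_def by (rule DERIV_chain[OF _ holomorphic_derivI[OF holf open_ball]]) simp
  then have "deriv v 0 = deriv f 0 / of_real (1 - (cmod a)\<^sup>2)"
    by (simp add: DERIV_imp_deriv aa del: of_real_diff of_real_power)
  with \<open>cmod (deriv v 0) \<le> 1\<close> pos have "cmod (deriv f 0) / (1 - (cmod a)\<^sup>2) \<le> 1"
    by (simp add: norm_divide del: of_real_diff of_real_power)
  with pos show ?thesis
    by (simp add: a_def divide_le_eq)
qed

lemma deriv_mult_ident_at_0:
  assumes holh: "h holomorphic_on ball 0 1" and w: "\<And>z. z \<in> ball 0 1 \<Longrightarrow> w z = z * h z"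
  shows "deriv w 0 = h 0" and "deriv (deriv w) 0 = 2 * deriv h 0"
proof -
  have dh: "(h has_field_derivative deriv h z) (at z)" if "z \<in> ball 0 1" for z
    using holomorphic_derivI[OF holh open_ball that] .
  have dw: "deriv w z = h z + z * deriv h z" if "z \<in> ball 0 1" for z
  proof -
    have "deriv w z = deriv (\<lambda>z. z * h z) z"
      using w that by (intro deriv_eq_on_open[OF open_ball[of 0 1]])
    also have "\<dots> = h z + z * deriv h z"
      using dh[OF that] by (intro DERIV_imp_deriv) (auto intro!: derivative_eq_intros)
    finally show ?thesis .
  qed
  then show "deriv w 0 = h 0" by simp
  have "deriv (deriv w) 0 = deriv (\<lambda>z. h z + z * deriv h z) 0"
    using dw by (intro deriv_eq_on_open[OF open_ball[of 0 1]]) auto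
  also have "\<dots> = 2 * deriv h 0"
    using dh[of 0] holomorphic_derivI[OF holomorphic_deriv[OF holh open_ball] open_ball, of 0]
    by (intro DERIV_imp_deriv) (auto intro!: derivative_eq_intros)
  finally show "deriv (deriv w) 0 = 2 * deriv h 0" .
qed

lemma Schwarz_factor_unimodular:
  assumes holw: "w holomorphic_on ball 0 1" and w0: "w 0 = 0"
    and no: "\<And>z. norm z < 1 \<Longrightarrow> norm (w z) < 1"
    and wh: "\<And>z. w z = z * h z" and h0: "h 0 = deriv w 0"
    and z: "norm z < 1" "1 \<le> norm (h z)"
  obtains \<alpha> where "norm \<alpha> = 1" "\<And>y. y \<in> ball 0 1 \<Longrightarrow> h y = \<alpha>"
proof -
  have "(\<exists>z. norm z < 1 \<and> z \<noteq> 0 \<and> norm (w z) = norm z) \<or> norm (deriv w 0) = 1"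
  proof (cases "z = 0")
    case True
    then show ?thesis
      using z Schwarz_Lemma(2)[OF holw w0 no z(1)] h0 by simp
  next
    case False
    have "norm (w z) = norm z * norm (h z)"
      by (simp add: wh norm_mult)
    moreover have "norm (w z) \<le> norm z"
      using Schwarz_Lemma(1)[OF holw w0 no z(1)] .
    moreover have "norm z \<le> norm z * norm (h z)"
      using z(2) False by (simp add: mult_le_cancel_left1)
    ultimately show ?thesis
      using False z(1) by auto
  qed
  then obtain \<alpha> where \<alpha>: "\<And>z. norm z < 1 \<Longrightarrow> w z = \<alpha> * z" and "norm \<alpha> = 1"
    using Schwarz_Lemma(3)[OF holw w0 no] by blast
  have "h y = \<alpha>" if "y \<in> ball 0 1" for y
  proof (cases "y = 0")
    case True
    have "deriv w 0 = deriv (\<lambda>z. \<alpha> * z) 0"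
      by (rule deriv_eq_on_open[OF open_ball[of 0 1]]) (auto simp: \<alpha>)
    then show ?thesis
      using True h0 by simp
  next
    case False
    then show ?thesis
      using \<alpha>[of y] wh[of y] that by simp
  qed
  with \<open>norm \<alpha> = 1\<close> show ?thesis
    using that by blast
qed

lemma Schwarz_second_coefficient:
  assumes holw: "w holomorphic_on ball 0 1" and w0: "w 0 = 0"
    and w_in: "\<And>z. z \<in> ball 0 1 \<Longrightarrow> w z \<in> ball 0 1"
  shows "cmod (deriv (deriv w) 0 / 2) \<le> 1 - (cmod (deriv w 0))\<^sup>2"
proof -
  define h where "h z = (if z = 0 then deriv w 0 else (w z - w 0) / (z - 0))" for z
  have holh: "h holomorphic_on ball 0 1"
    unfolding h_def[abs_def] by (rule pole_lemma[OF holw]) simp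
  have wh: "w z = z * h z" for z
    using w0 by (simp add: h_def)
  note dw = deriv_mult_ident_at_0[OF holh wh]
  show ?thesis
  proof (cases "\<forall>z\<in>ball 0 1. h z \<in> ball 0 1")
    case True
    then show ?thesis
      using Schwarz_Pick_deriv_0[OF holh] dw by simp
  next
    case False
    then obtain z where "norm z < 1" "1 \<le> norm (h z)"
      by auto
    moreover have "\<And>z. norm z < 1 \<Longrightarrow> norm (w z) < 1"
      using w_in by auto
    ultimately obtain \<alpha> where "norm \<alpha> = 1" and h_const: "\<And>y. y \<in> ball 0 1 \<Longrightarrow> h y = \<alpha>"
      using Schwarz_factor_unimodular[OF holw w0 _ wh] by (metis dw(1))
    have "deriv h 0 = deriv (\<lambda>_. \<alpha>) 0"
      by (rule deriv_eq_on_open[OF open_ball[of 0 1]]) (simp_all add: h_const)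
    with dw \<open>norm \<alpha> = 1\<close> h_const[of 0] show ?thesis
      by simp
  qed
qed

lemma deriv_compose_holomorphic:
  assumes holg: "g holomorphic_on A" and "open A" and holw: "w holomorphic_on B" and "open B"
    and w_in: "w ` B \<subseteq> A" and x: "x \<in> B"
  shows "deriv (\<lambda>z. g (w z)) x = deriv g (w x) * deriv w x"
    and "deriv (deriv (\<lambda>z. g (w z))) x =
           deriv (deriv g) (w x) * (deriv w x)\<^sup>2 + deriv g (w x) * deriv (deriv w) x"
proof -
  have dg: "(g has_field_derivative deriv g y) (at y)"
    and ddg: "(deriv g has_field_derivative deriv (deriv g) y) (at y)" if "y \<in> A" for y
    using holomorphic_derivI[OF holg \<open>open A\<close> that]
      holomorphic_derivI[OF holomorphic_deriv[OF holg \<open>open A\<close>] \<open>open A\<close> that] by auto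
  have dw: "(w has_field_derivative deriv w y) (at y)"
    and ddw: "(deriv w has_field_derivative deriv (deriv w) y) (at y)" if "y \<in> B" for y
    using holomorphic_derivI[OF holw \<open>open B\<close> that]
      holomorphic_derivI[OF holomorphic_deriv[OF holw \<open>open B\<close>] \<open>open B\<close> that] by auto
  have first: "deriv (\<lambda>z. g (w z)) y = deriv g (w y) * deriv w y" if "y \<in> B" for y
    using that w_in by (intro DERIV_imp_deriv DERIV_chain2[OF dg dw]) auto
  then show "deriv (\<lambda>z. g (w z)) x = deriv g (w x) * deriv w x"
    using x .
  have "deriv (deriv (\<lambda>z. g (w z))) x = deriv (\<lambda>y. deriv g (w y) * deriv w y) x"
    using first by (intro deriv_eq_on_open[OF \<open>open B\<close> x])
  also have "\<dots> = deriv (deriv g) (w x) * (deriv w x)\<^sup>2 + deriv g (w x) * deriv (deriv w) x"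
    using x w_in
    by (intro DERIV_imp_deriv)
      (auto intro!: derivative_eq_intros DERIV_chain2[OF ddg dw] ddw simp: power2_eq_square)
  finally show "deriv (deriv (\<lambda>z. g (w z))) x =
      deriv (deriv g) (w x) * (deriv w x)\<^sup>2 + deriv g (w x) * deriv (deriv w) x" .
qed

lemma coefficients_of_radial_relation:
  assumes holk: "k holomorphic_on ball 0 1" and holQ: "Q holomorphic_on ball 0 1"
    and k0: "k 0 = 1" and Q0: "Q 0 = 1"
    and rel: "\<And>z. z \<in> ball 0 1 \<Longrightarrow> k z + z * deriv k z = k z * Q z"
  shows "deriv k 0 = deriv Q 0"
    and "deriv (deriv k) 0 = (deriv k 0)\<^sup>2 + deriv (deriv Q) 0 / 2"
proof -
  let ?B = "ball (0::complex) 1"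
  have d: "(f has_field_derivative deriv f z) (at z)" if "f holomorphic_on ?B" "z \<in> ?B" for f z
    using holomorphic_derivI[OF that(1) open_ball that(2)] .
  have holk': "deriv k holomorphic_on ?B" and holk'': "deriv (deriv k) holomorphic_on ?B"
    and holQ': "deriv Q holomorphic_on ?B"
    by (intro holomorphic_intros holk holQ open_ball)+
  have rel': "2 * deriv k z + z * deriv (deriv k) z = deriv k z * Q z + k z * deriv Q z"
    if z: "z \<in> ?B" for z
  proof -
    have "deriv (\<lambda>z. k z + z * deriv k z) z = deriv (\<lambda>z. k z * Q z) z"
      using rel by (intro deriv_eq_on_open[OF open_ball z])
    moreover have "deriv (\<lambda>z. k z + z * deriv k z) z = 2 * deriv k z + z * deriv (deriv k) z"
      using d[OF holk z] d[OF holk' z] by (intro DERIV_imp_deriv) (auto intro!: derivative_eq_intros)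
    moreover have "deriv (\<lambda>z. k z * Q z) z = deriv k z * Q z + k z * deriv Q z"
      using d[OF holk z] d[OF holQ z] by (intro DERIV_imp_deriv) (auto intro!: derivative_eq_intros)
    ultimately show ?thesis by simp
  qed
  show first: "deriv k 0 = deriv Q 0"
    using rel'[of 0] k0 Q0 by simp
  have "deriv (\<lambda>z. 2 * deriv k z + z * deriv (deriv k) z) 0
      = deriv (\<lambda>z. deriv k z * Q z + k z * deriv Q z) 0"
    using rel' by (intro deriv_eq_on_open[OF open_ball[of 0 1]]) simp_all
  moreover have "deriv (\<lambda>z. 2 * deriv k z + z * deriv (deriv k) z) 0 = 3 * deriv (deriv k) 0"
    using d[OF holk', of 0] d[OF holk'', of 0]
    by (intro DERIV_imp_deriv) (auto intro!: derivative_eq_intros)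
  moreover have "deriv (\<lambda>z. deriv k z * Q z + k z * deriv Q z) 0
      = deriv (deriv k) 0 * Q 0 + 2 * deriv k 0 * deriv Q 0 + k 0 * deriv (deriv Q) 0"
    using d[OF holk, of 0] d[OF holk', of 0] d[OF holQ, of 0] d[OF holQ', of 0]
    by (intro DERIV_imp_deriv) (auto intro!: derivative_eq_intros simp: algebra_simps)
  ultimately show "deriv (deriv k) 0 = (deriv k 0)\<^sup>2 + deriv (deriv Q) 0 / 2"
    using k0 Q0 first by (simp add: power2_eq_square field_simps)
qed

lemma radial_relation_solvable:
  assumes holQ: "Q holomorphic_on ball 0 1" and Q0: "Q 0 = 1"
  obtains K where "K holomorphic_on ball 0 1" "K 0 = 1" "\<And>z. z \<in> ball 0 1 \<Longrightarrow> K z \<noteq> 0"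
    and "\<And>z. z \<in> ball 0 1 \<Longrightarrow> K z + z * deriv K z = K z * Q z"
proof -
  define P where "P z = (if z = 0 then deriv Q 0 else (Q z - Q 0) / (z - 0))" for z
  have holP: "P holomorphic_on ball 0 1"
    unfolding P_def[abs_def] by (rule pole_lemma[OF holQ]) simp
  have QP: "Q z = 1 + z * P z" for z
    using Q0 by (simp add: P_def)
  obtain H where H: "\<And>z. z \<in> ball 0 1 \<Longrightarrow> (H has_field_derivative P z) (at z within ball 0 1)"
    using holomorphic_convex_primitive'[OF convex_ball open_ball holP] by blast
  define K where "K z = exp (H z - H 0)" for z
  have dK: "(K has_field_derivative P z * K z) (at z)" if "z \<in> ball 0 1" for z
    using H[OF that] at_within_open[OF that open_ball] unfolding K_def
    by (auto intro!: derivative_eq_intros)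
  show ?thesis
  proof
    show "K holomorphic_on ball 0 1"
      using dK by (subst holomorphic_on_open) blast+
    show "K 0 = 1" "\<And>z. K z \<noteq> 0"
      by (simp_all add: K_def)
    show "K z + z * deriv K z = K z * Q z" if "z \<in> ball 0 1" for z
      using DERIV_imp_deriv[OF dK[OF that]] by (simp add: QP algebra_simps)
  qed
qed

lemma subordinate_to_univalent:
  assumes holp: "p holomorphic_on ball 0 1" and holG: "G holomorphic_on ball 0 1"
    and inj: "inj_on G (ball 0 1)" and p0: "p 0 = G 0"
    and p_in: "\<And>z. z \<in> ball 0 1 \<Longrightarrow> p z \<in> G ` ball 0 1"
  obtains w where "w holomorphic_on ball 0 1" "w 0 = 0" "\<And>z. z \<in> ball 0 1 \<Longrightarrow> w z \<in> ball 0 1"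
    and "\<And>z. z \<in> ball 0 1 \<Longrightarrow> p z = G (w z)"
proof -
  obtain Ginv where holGinv: "Ginv holomorphic_on G ` ball 0 1"
    and Ginv: "\<And>z. z \<in> ball 0 1 \<Longrightarrow> Ginv (G z) = z"
    using holomorphic_has_inverse[OF holG open_ball inj] by metis
  show ?thesis
  proof
    show "(Ginv \<circ> p) holomorphic_on ball 0 1"
      using p_in by (intro holomorphic_on_compose_gen[OF holp holGinv]) auto
    show "(Ginv \<circ> p) 0 = 0"
      by (simp add: p0 Ginv)
    show "(Ginv \<circ> p) z \<in> ball 0 1" "p z = G ((Ginv \<circ> p) z)" if "z \<in> ball 0 1" for z
      using p_in[OF that] Ginv by auto
  qed
qed

lemma extremal_Schwarz_function:
  fixes \<Phi> :: complex
  obtains w where "w holomorphic_on ball 0 1" "w 0 = 0" "\<And>z. z \<in> ball 0 1 \<Longrightarrow> w z \<in> ball 0 1"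
    and "cmod (deriv (deriv w) 0 / 2 + (deriv w 0)\<^sup>2 * \<Phi>) = max 1 (cmod \<Phi>)"
proof (cases "1 \<le> cmod \<Phi>")
  case True
  show ?thesis
    by (rule that[of "\<lambda>z. z"]) (use True in \<open>auto simp: max_def\<close>)
next
  case False
  have "deriv (\<lambda>z::complex. z\<^sup>2) = (\<lambda>z. 2 * z)"
    by (rule ext, rule DERIV_imp_deriv) (auto intro!: derivative_eq_intros)
  moreover have "z\<^sup>2 \<in> ball 0 1" if "z \<in> ball 0 1" for z :: complex
    using that by (simp add: norm_power power_less_one_iff abs_square_less_1)
  ultimately show ?thesis
    using False by (intro that[of "\<lambda>z. z\<^sup>2"]) (auto intro: holomorphic_intros simp: max_def)
qed

section \<open>The Fekete-Szego functional\<close>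

definition spiral_factor :: "real \<Rightarrow> complex" where
  "spiral_factor \<beta> = exp (- \<i> * of_real \<beta>) * of_real (cos \<beta>)"

lemma g_beta_spiral_factor: "g_beta g \<beta> z = 1 + spiral_factor \<beta> * (g z - 1)"
proof -
  have "exp (- \<i> * of_real \<beta>) * exp (\<i> * of_real \<beta>) = 1"
    by (simp add: exp_add[symmetric])
  moreover have "exp (\<i> * of_real \<beta>) = of_real (cos \<beta>) + \<i> * of_real (sin \<beta>)"
    by (simp add: exp_Euler cos_of_real sin_of_real)
  ultimately have "exp (- \<i> * of_real \<beta>) * (of_real (cos \<beta>) + \<i> * of_real (sin \<beta>)) = 1"
    by simp
  then show ?thesis
    unfolding g_beta_def spiral_factor_def by algebra
qed

lemma cos_pos_of_abs_less: "\<bar>\<beta>\<bar> < pi / 2 \<Longrightarrow> cos \<beta> > 0"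
  by (rule cos_gt_zero_pi) auto

lemma norm_spiral_factor: "\<bar>\<beta>\<bar> < pi / 2 \<Longrightarrow> cmod (spiral_factor \<beta>) = cos \<beta>"
  using cos_pos_of_abs_less[of \<beta>] by (simp add: spiral_factor_def norm_mult)

lemma g_beta_nonzero:
  assumes "\<bar>\<beta>\<bar> < pi / 2" and "Re (g z) > 0"
  shows "g_beta g \<beta> z \<noteq> 0"
proof -
  have "Re (of_real (cos \<beta>) * g z + \<i> * of_real (sin \<beta>)) > 0"
    using assms cos_pos_of_abs_less[of \<beta>] by simp
  then have "of_real (cos \<beta>) * g z + \<i> * of_real (sin \<beta>) \<noteq> 0"
    by (metis less_irrefl zero_complex.sel(1))
  then show ?thesis
    unfolding g_beta_def by simp
qed

lemma holomorphic_g_beta: "g holomorphic_on S \<Longrightarrow> g_beta g \<beta> holomorphic_on S"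
  unfolding g_beta_def[abs_def] by (intro holomorphic_intros)

lemma inj_on_g_beta:
  assumes "\<bar>\<beta>\<bar> < pi / 2" and "inj_on g S"
  shows "inj_on (g_beta g \<beta>) S"
proof -
  have "spiral_factor \<beta> \<noteq> 0"
    using norm_spiral_factor[OF assms(1)] cos_pos_of_abs_less[OF assms(1)] by auto
  with assms(2) show ?thesis
    by (auto simp: inj_on_def g_beta_spiral_factor)
qed

lemma coefficients_of_g_beta_relation:
  assumes holk: "k holomorphic_on ball 0 1" and k0: "k 0 = 1"
    and holw: "w holomorphic_on ball 0 1" and w0: "w 0 = 0"
    and w_in: "\<And>z. z \<in> ball 0 1 \<Longrightarrow> w z \<in> ball 0 1"
    and holg: "g holomorphic_on ball 0 1" and g0: "g 0 = 1"
    and rel: "\<And>z. z \<in> ball 0 1 \<Longrightarrow> k z + z * deriv k z = k z * g_beta g \<beta> (w z)"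
  shows "deriv k 0 = spiral_factor \<beta> * deriv g 0 * deriv w 0"
    and "deriv (deriv k) 0 = (deriv k 0)\<^sup>2
      + spiral_factor \<beta> * (deriv (deriv g) 0 * (deriv w 0)\<^sup>2 + deriv g 0 * deriv (deriv w) 0) / 2"
proof -
  let ?c = "spiral_factor \<beta>" and ?B = "ball (0::complex) 1"
  have w_ball: "w ` ?B \<subseteq> ?B"
    using w_in by blast
  have holgw: "(\<lambda>z. g (w z)) holomorphic_on ?B"
    using holomorphic_on_compose_gen[OF holw holg w_ball] by (simp add: o_def)
  have Q: "g_beta g \<beta> (w z) = 1 + ?c * (g (w z) - 1)" for z
    by (rule g_beta_spiral_factor)
  have holQ: "(\<lambda>z. g_beta g \<beta> (w z)) holomorphic_on ?B"
    unfolding Q by (intro holomorphic_intros holgw)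
  note chain = deriv_compose_holomorphic[OF holg open_ball holw open_ball w_ball centre_in_ball[THEN iffD2]]
  have dgw: "(f has_field_derivative deriv f z) (at z)"
    if "f holomorphic_on ?B" "z \<in> ?B" for f z
    using holomorphic_derivI[OF that(1) open_ball that(2)] .
  have dQ_eq: "deriv (\<lambda>z. g_beta g \<beta> (w z)) z = ?c * deriv (\<lambda>z. g (w z)) z" if "z \<in> ?B" for z
    unfolding Q using dgw[OF holgw that] by (intro DERIV_imp_deriv) (auto intro!: derivative_eq_intros)
  then have dQ: "deriv (\<lambda>z. g_beta g \<beta> (w z)) 0 = ?c * deriv g 0 * deriv w 0"
    using chain(1) w0 by simp
  have "deriv (deriv (\<lambda>z. g_beta g \<beta> (w z))) 0 = deriv (\<lambda>z. ?c * deriv (\<lambda>z. g (w z)) z) 0"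
    using dQ_eq by (intro deriv_eq_on_open[OF open_ball[of 0 1]]) auto
  also have "\<dots> = ?c * deriv (deriv (\<lambda>z. g (w z))) 0"
    using dgw[OF holomorphic_deriv[OF holgw open_ball], of 0]
    by (intro DERIV_imp_deriv) (auto intro!: derivative_eq_intros)
  finally have ddQ: "deriv (deriv (\<lambda>z. g_beta g \<beta> (w z))) 0
      = ?c * (deriv (deriv g) 0 * (deriv w 0)\<^sup>2 + deriv g 0 * deriv (deriv w) 0)"
    using chain(2) w0 by simp
  have "g_beta g \<beta> (w 0) = 1"
    by (simp add: g_beta_spiral_factor w0 g0)
  note coeffs = coefficients_of_radial_relation[OF holk holQ k0 this rel]
  show "deriv k 0 = ?c * deriv g 0 * deriv w 0"
    using coeffs(1) dQ by simp
  show "deriv (deriv k) 0 = (deriv k 0)\<^sup>2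
      + ?c * (deriv (deriv g) 0 * (deriv w 0)\<^sup>2 + deriv g 0 * deriv (deriv w) 0) / 2"
    using coeffs(2) ddQ by simp
qed

definition fs_multiplier :: "real \<Rightarrow> (complex \<Rightarrow> complex) \<Rightarrow> complex \<Rightarrow> complex" where
  "fs_multiplier \<beta> g lam =
     deriv (deriv g) 0 / (2 * deriv g 0) + (1 - 2 * lam) * spiral_factor \<beta> * deriv g 0"

lemma psi_fs_multiplier: "psi \<beta> g lam = cos \<beta> * max 1 (cmod (fs_multiplier \<beta> g lam))"
proof -
  have "exp (\<i> * of_real \<beta>) * fs_multiplier \<beta> g lam =
      (1 - 2 * lam) * of_real (cos \<beta>) * deriv g 0
      + exp (\<i> * of_real \<beta>) / 2 * (deriv (deriv g) 0 / deriv g 0)"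
    by (simp add: fs_multiplier_def spiral_factor_def exp_minus field_simps)
  then show ?thesis
    unfolding psi_def by (metis norm_exp_i_times mult_1 norm_mult)
qed

lemma Fekete_Szego_factorization:
  assumes "deriv g 0 \<noteq> 0"
    and K1: "K1 = spiral_factor \<beta> * deriv g 0 * W1"
    and K2: "K2 = K1\<^sup>2 + spiral_factor \<beta> * (deriv (deriv g) 0 * W1\<^sup>2 + deriv g 0 * W2) / 2"
  shows "K2 / 2 - lam * K1\<^sup>2 =
    spiral_factor \<beta> * deriv g 0 / 2 * (W2 / 2 + W1\<^sup>2 * fs_multiplier \<beta> g lam)"
  using assms(1) unfolding K2 K1 fs_multiplier_def by (simp add: field_simps power2_eq_square)

lemma norm_Fekete_Szego_le:
  assumes "\<bar>\<beta>\<bar> < pi / 2" and Schwarz: "cmod (W2 / 2) \<le> 1 - (cmod W1)\<^sup>2"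
  shows "cmod (spiral_factor \<beta> * deriv g 0 / 2 * (W2 / 2 + W1\<^sup>2 * fs_multiplier \<beta> g lam))
    \<le> 1 / 2 * psi \<beta> g lam * cmod (deriv g 0)"
proof -
  define M where "M = cmod (fs_multiplier \<beta> g lam)"
  define t where "t = (cmod W1)\<^sup>2"
  have t: "0 \<le> t" "t \<le> 1"
    using Schwarz norm_ge_zero[of "W2 / 2"] unfolding t_def by (simp, linarith)
  have "cmod (W2 / 2 + W1\<^sup>2 * fs_multiplier \<beta> g lam) \<le> cmod (W2 / 2) + t * M"
    using norm_triangle_ineq unfolding t_def M_def by (metis norm_mult norm_power)
  also have "\<dots> \<le> (1 - t) * 1 + t * M"
    using Schwarz t_def by simp
  also have "\<dots> \<le> (1 - t) * max 1 M + t * max 1 M"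
    using t by (intro add_mono mult_left_mono) auto
  finally have "cmod (W2 / 2 + W1\<^sup>2 * fs_multiplier \<beta> g lam) \<le> max 1 M"
    by (simp add: algebra_simps)
  then show ?thesis
    using cos_pos_of_abs_less[of \<beta>] assms(1)
    by (simp add: psi_fs_multiplier norm_mult norm_divide norm_spiral_factor M_def mult.commute
        mult_left_mono)
qed

lemma norm_Fekete_Szego_eq:
  assumes "\<bar>\<beta>\<bar> < pi / 2"
    and "cmod (W2 / 2 + W1\<^sup>2 * fs_multiplier \<beta> g lam) = max 1 (cmod (fs_multiplier \<beta> g lam))"
  shows "cmod (spiral_factor \<beta> * deriv g 0 / 2 * (W2 / 2 + W1\<^sup>2 * fs_multiplier \<beta> g lam))
    = 1 / 2 * psi \<beta> g lam * cmod (deriv g 0)"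
  using assms by (simp add: psi_fs_multiplier norm_mult norm_divide norm_spiral_factor)

section \<open>Restriction to a complex line\<close>

lemma inv_apply_eqI:
  assumes "L o\<^sub>L A = id_blinfun" and "blinfun_apply A z = y"
  shows "inv_apply A y = z"
proof -
  have unique: "z' = z" if "blinfun_apply A z' = y" for z'
  proof -
    have "(L o\<^sub>L A) z' = (L o\<^sub>L A) z"
      using that assms(2) by simp
    then show ?thesis
      using assms(1) by simp
  qed
  show ?thesis
    unfolding inv_apply_def using assms(2) unique by (rule the_equality)
qed

lemma has_derivative_blinfun_apply_const:
  assumes "(A has_derivative A') (at x within S)"
  shows "((\<lambda>y. blinfun_apply (A y) v) has_derivative (\<lambda>h. blinfun_apply (A' h) v)) (at x within S)"
  using bounded_bilinear.FDERIV[OF bounded_bilinear_blinfun_apply assms has_derivative_const[of v]]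
  by simp

context complex_scaled
begin

lemma derivative_along_line:
  assumes dG: "(G has_derivative D) (at (s0 *\<^sub>R v))"
    and d\<psi>: "(\<psi> has_field_derivative \<psi>') (at (of_real s0))"
    and "e > 0" and G: "\<And>s. \<bar>s - s0\<bar> < e \<Longrightarrow> G (s *\<^sub>R v) = cs (\<psi> (of_real s)) w"
  shows "D v = cs \<psi>' w"
proof -
  interpret D: bounded_linear D
    using has_derivative_bounded_linear[OF dG] .
  have "((\<lambda>s. s *\<^sub>R v) has_derivative (\<lambda>h. h *\<^sub>R v)) (at s0)"
    by (auto intro!: derivative_eq_intros)
  from has_derivative_compose[OF this dG]
  have "((\<lambda>s. G (s *\<^sub>R v)) has_vector_derivative D v) (at s0)"
    by (simp add: has_vector_derivative_def D.scaleR)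
  moreover have "((\<lambda>s. cs (\<psi> (of_real s)) w) has_vector_derivative cs \<psi>' w) (at s0)"
    by (rule bounded_linear.has_vector_derivative[OF cs.bounded_linear_left
          has_vector_derivative_real_field[OF d\<psi>]])
  then have "((\<lambda>s. G (s *\<^sub>R v)) has_vector_derivative cs \<psi>' w) (at s0)"
    by (rule has_vector_derivative_transform_within_open[where S = "ball s0 e"])
      (use \<open>e > 0\<close> G in \<open>auto simp: dist_real_def abs_minus_commute\<close>)
  ultimately show ?thesis
    by (rule vector_derivative_unique_at)
qed

end

(* F restricted to the complex line through the unit vector u; for F x = f x x take
   k z = f (z u). *)
locale radial_slice = complex_scaled cs for cs :: "complex \<Rightarrow> 'a::banach \<Rightarrow> 'a" +
  fixes F :: "'a \<Rightarrow> 'a" and DF :: "'a \<Rightarrow> 'a \<Rightarrow>\<^sub>L 'a" and D2F :: "'a \<Rightarrow> 'a \<Rightarrow>\<^sub>L 'a \<Rightarrow>\<^sub>L 'a"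
    and D3 :: "'a \<Rightarrow>\<^sub>L 'a \<Rightarrow>\<^sub>L 'a \<Rightarrow>\<^sub>L 'a" and u :: 'a and k :: "complex \<Rightarrow> complex"
  assumes norm_u: "norm u = 1"
    and holomorphic_k: "k holomorphic_on ball 0 1"
    and F_slice: "z \<in> ball 0 1 \<Longrightarrow> F (cs z u) = cs (z * k z) u"
    and has_derivative_F: "x \<in> ball 0 1 \<Longrightarrow> (F has_derivative DF x) (at x)"
    and DF_cs: "x \<in> ball 0 1 \<Longrightarrow> DF x (cs a v) = cs a (DF x v)"
    and has_derivative_DF: "x \<in> ball 0 1 \<Longrightarrow> (DF has_derivative D2F x) (at x)"
    and has_derivative_D2F: "(D2F has_derivative D3) (at 0)"
begin

lemma has_field_derivative_k:
  assumes "z \<in> ball 0 1"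
  shows "(k has_field_derivative deriv k z) (at z)"
    and "(deriv k has_field_derivative deriv (deriv k) z) (at z)"
    and "(deriv (deriv k) has_field_derivative deriv (deriv (deriv k)) z) (at z)"
proof -
  have "deriv k holomorphic_on ball 0 1" "deriv (deriv k) holomorphic_on ball 0 1"
    by (intro holomorphic_intros holomorphic_k open_ball)+
  with holomorphic_k show "(k has_field_derivative deriv k z) (at z)"
    and "(deriv k has_field_derivative deriv (deriv k) z) (at z)"
    and "(deriv (deriv k) has_field_derivative deriv (deriv (deriv k)) z) (at z)"
    by (auto intro!: holomorphic_derivI assms)
qed

lemma real_multiple_u_in_ball: "\<bar>s\<bar> < 1 \<Longrightarrow> s *\<^sub>R u \<in> ball 0 1 \<and> of_real s \<in> ball (0::complex) 1"
  and real_multiple_u_eq: "s *\<^sub>R u = cs (of_real s) u"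
  using norm_u by (auto simp: cs_of_real)

lemma DF_slice:
  assumes "\<bar>t\<bar> < 1"
  shows "DF (t *\<^sub>R u) u = cs (k (of_real t) + of_real t * deriv k (of_real t)) u"
proof (rule derivative_along_line[of F "DF (t *\<^sub>R u)" t u])
  show "(F has_derivative DF (t *\<^sub>R u)) (at (t *\<^sub>R u))"
    using real_multiple_u_in_ball[OF assms] by (blast intro: has_derivative_F)
  show "((\<lambda>z. z * k z) has_field_derivative k (of_real t) + of_real t * deriv k (of_real t))
      (at (of_real t))"
    using has_field_derivative_k(1) real_multiple_u_in_ball[OF assms] by (auto intro!: derivative_eq_intros)
  show "F (s *\<^sub>R u) = cs (of_real s * k (of_real s)) u" if "\<bar>s - t\<bar> < 1 - \<bar>t\<bar>" for s
    using that real_multiple_u_in_ball[of s] by (simp add: real_multiple_u_eq F_slice)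
qed (use assms in simp)

lemma D2F_slice:
  assumes "\<bar>t\<bar> < 1"
  shows "D2F (t *\<^sub>R u) u u =
    cs (2 * deriv k (of_real t) + of_real t * deriv (deriv k) (of_real t)) u"
proof (rule derivative_along_line[of "\<lambda>x. DF x u" "\<lambda>h. D2F (t *\<^sub>R u) h u" t u])
  show "((\<lambda>x. DF x u) has_derivative (\<lambda>h. D2F (t *\<^sub>R u) h u)) (at (t *\<^sub>R u))"
    using real_multiple_u_in_ball[OF assms]
    by (blast intro: has_derivative_blinfun_apply_const has_derivative_DF)
  show "((\<lambda>z. k z + z * deriv k z) has_field_derivative
      2 * deriv k (of_real t) + of_real t * deriv (deriv k) (of_real t)) (at (of_real t))"
    using real_multiple_u_in_ball[OF assms] by (auto intro!: derivative_eq_intros has_field_derivative_k)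
  show "DF (s *\<^sub>R u) u = cs (k (of_real s) + of_real s * deriv k (of_real s)) u"
    if "\<bar>s - t\<bar> < 1 - \<bar>t\<bar>" for s
    using that by (intro DF_slice) simp
qed (use assms in simp)

lemma D3_slice: "D3 u u u = cs (3 * deriv (deriv k) 0) u"
proof (rule derivative_along_line[of "\<lambda>x. D2F x u u" "\<lambda>h. D3 h u u" 0 u])
  show "((\<lambda>x. D2F x u u) has_derivative (\<lambda>h. D3 h u u)) (at (0 *\<^sub>R u))"
    using has_derivative_D2F by (simp add: has_derivative_blinfun_apply_const)
  show "((\<lambda>z. 2 * deriv k z + z * deriv (deriv k) z) has_field_derivative 3 * deriv (deriv k) 0)
      (at (of_real 0))"
    using has_field_derivative_k(2,3)[of 0] by (auto intro!: derivative_eq_intros)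
  show "D2F (s *\<^sub>R u) u u = cs (2 * deriv k (of_real s) + of_real s * deriv (deriv k) (of_real s)) u"
    if "\<bar>s - 0\<bar> < 1" for s
    using that by (intro D2F_slice) simp
qed simp

lemma D2F_0_slice: "D2F 0 u (cs a u) = cs (2 * a * deriv k 0) u"
proof (rule derivative_along_line[of "\<lambda>x. DF x (cs a u)" "\<lambda>h. D2F 0 h (cs a u)" 0 u])
  show "((\<lambda>x. DF x (cs a u)) has_derivative (\<lambda>h. D2F 0 h (cs a u))) (at (0 *\<^sub>R u))"
    using has_derivative_DF[of 0] by (simp add: has_derivative_blinfun_apply_const)
  show "((\<lambda>z. a * (k z + z * deriv k z)) has_field_derivative 2 * a * deriv k 0) (at (of_real 0))"
    using has_field_derivative_k(1,2)[of 0] by (auto intro!: derivative_eq_intros)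
  show "DF (s *\<^sub>R u) (cs a u) = cs (a * (k (of_real s) + of_real s * deriv k (of_real s))) u"
    if "\<bar>s - 0\<bar> < 1" for s
    using that DF_slice[of s] real_multiple_u_in_ball[of s] by (simp add: DF_cs cs_mult)
qed simp

lemma norm_lhs_expr_slice:
  assumes "0 \<le> r"
  shows "norm (lhs_expr cs D2F D3 lam (r *\<^sub>R u))
    = r ^ 3 * cmod (deriv (deriv k) 0 / 2 - lam * (deriv k 0)\<^sup>2)"
proof -
  define K1 where "K1 = deriv k 0"
  define K2 where "K2 = deriv (deriv k) 0"
  have "D3 (r *\<^sub>R u) (r *\<^sub>R u) (r *\<^sub>R u) = cs (of_real (r ^ 3) * (3 * K2)) u"
    using D3_slice unfolding K2_def
    by (simp add: blinfun.scaleR_left blinfun.scaleR_right cs_mult cs_of_real power3_eq_cube)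
  moreover have "(1 / fact 2) *\<^sub>R D2F 0 (r *\<^sub>R u) (r *\<^sub>R u) = cs (of_real (r\<^sup>2) * K1) u"
    using D2F_0_slice[of 1] cs_of_real[of 2] unfolding K1_def
    by (simp add: blinfun.scaleR_left blinfun.scaleR_right cs_mult cs_of_real power2_eq_square)
  moreover have "D2F 0 (r *\<^sub>R u) (cs (of_real (r\<^sup>2) * K1) u) = cs (of_real (r ^ 3) * (2 * K1\<^sup>2)) u"
    using D2F_0_slice[of "of_real (r\<^sup>2) * K1"] unfolding K1_def
    by (simp add: blinfun.scaleR_left blinfun.scaleR_right cs_mult cs_of_real power2_eq_square
        power3_eq_cube ac_simps)
  ultimately have "lhs_expr cs D2F D3 lam (r *\<^sub>R u) = cs (of_real (r ^ 3) * (K2 / 2 - lam * K1\<^sup>2)) u"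
    unfolding lhs_expr_def
    by (simp add: cs.scaleR_left[symmetric] cs_mult[symmetric] cs.diff_left[symmetric]
        scaleR_conv_of_real algebra_simps power2_eq_square fact_numeral)
  then show ?thesis
    using assms by (simp add: norm_cs norm_u norm_mult norm_power K1_def K2_def)
qed

lemma k_0_eq_1:
  assumes "DF 0 = id_blinfun"
  shows "k 0 = 1"
proof -
  have "cs (k 0 - 1) u = 0"
    using DF_slice[of 0] assms by (simp add: cs.diff_left)
  then have "cmod (k 0 - 1) = 0"
    using norm_cs[of "k 0 - 1" u] norm_u by simp
  then show ?thesis
    by simp
qed

lemma DF_radial:
  assumes z: "z \<in> ball 0 1"
  shows "DF (cs z u) (cs z u) = cs (z * (k z + z * deriv k z)) u"
proof (rule derivative_along_line[of F "DF (cs z u)" 1 "cs z u"])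
  show "(F has_derivative DF (cs z u)) (at (1 *\<^sub>R cs z u))"
    using z norm_u by (simp add: has_derivative_F norm_cs)
  have "(k has_field_derivative deriv k z) (at (1 * z))"
    using has_field_derivative_k(1)[OF z] by simp
  moreover have "((\<lambda>\<zeta>. \<zeta> * z) has_field_derivative z) (at 1)"
    by (auto intro!: derivative_eq_intros)
  ultimately have "((\<lambda>\<zeta>. k (\<zeta> * z)) has_field_derivative deriv k z * z) (at 1)"
    by (rule DERIV_chain2[where g = "\<lambda>\<zeta>. \<zeta> * z" and x = 1])
  then show "((\<lambda>\<zeta>. \<zeta> * z * k (\<zeta> * z)) has_field_derivative z * (k z + z * deriv k z)) (at (of_real 1))"
    by (auto intro!: derivative_eq_intros simp: algebra_simps)
  show "0 < 1 - cmod z"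
    using z by simp
  show "F (s *\<^sub>R cs z u) = cs (of_real s * z * k (of_real s * z)) u" if "\<bar>s - 1\<bar> < 1 - cmod z" for s
  proof -
    have "\<bar>s\<bar> \<le> 2 - cmod z"
      using that by linarith
    then have "\<bar>s\<bar> * cmod z \<le> (2 - cmod z) * cmod z"
      by (rule mult_right_mono) simp
    also have "\<dots> = 1 - (1 - cmod z)\<^sup>2"
      by (simp add: power2_eq_square algebra_simps)
    also have "\<dots> < 1"
      using z by simp
    finally have "of_real s * z \<in> ball 0 1"
      by (simp add: norm_mult)
    then show ?thesis
      by (simp add: cs_of_real[symmetric] cs_mult[symmetric] F_slice)
  qed
qed

lemma inv_apply_DF_radial:
  assumes L: "L o\<^sub>L DF (cs z u) = id_blinfun" and z: "z \<in> ball 0 1" "z \<noteq> 0"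
  shows "k z + z * deriv k z \<noteq> 0"
    and "inv_apply (DF (cs z u)) (F (cs z u)) = cs (k z / (k z + z * deriv k z)) (cs z u)"
proof -
  define x where "x = cs z u"
  define A where "A = k z + z * deriv k z"
  have "norm x = cmod z"
    by (simp add: x_def norm_cs norm_u)
  with z have x: "x \<in> ball 0 1" "x \<noteq> 0"
    by auto
  have DF_x: "DF x x = cs A x"
    using DF_radial[OF z(1)] by (simp add: x_def A_def cs_mult cs_commute)
  show "A \<noteq> 0" unfolding A_def[symmetric]
  proof
    assume "A = 0"
    then have "(L o\<^sub>L DF x) x = 0"
      by (simp add: DF_x cs.zero_left)
    with L x(2) show False
      by (simp add: x_def)
  qed
  have "DF x (cs (k z / A) x) = cs (k z / A) (cs A x)"
    by (simp add: DF_cs[OF x(1)] DF_x)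
  also have "\<dots> = cs (k z) x"
    using \<open>A \<noteq> 0\<close> by (simp add: cs_mult[symmetric])
  also have "\<dots> = F x"
    using F_slice[OF z(1)] by (simp add: x_def cs_mult[symmetric] mult.commute)
  finally show "inv_apply (DF (cs z u)) (F (cs z u)) = cs (k z / A) (cs z u)"
    unfolding x_def by (rule inv_apply_eqI[OF L])
qed

lemma radial_quotient_in_g_beta:
  assumes left_inverse: "\<And>x. x \<in> ball 0 1 \<Longrightarrow> \<exists>L. L o\<^sub>L DF x = id_blinfun"
    and Mhat: "Mhat cs g \<beta> (\<lambda>x. inv_apply (DF x) (F x))"
    and nonzero: "0 \<notin> g_beta g \<beta> ` ball 0 1"
    and z: "z \<in> ball 0 1" "z \<noteq> 0"
  shows "k z \<noteq> 0 \<and> (k z + z * deriv k z) / k z \<in> g_beta g \<beta> ` ball 0 1"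
proof -
  define x where "x = cs z u"
  define A where "A = k z + z * deriv k z"
  have "norm x = cmod z"
    by (simp add: x_def norm_cs norm_u)
  with z have x: "x \<in> ball 0 1" "x \<noteq> 0"
    by auto
  obtain L where "L o\<^sub>L DF x = id_blinfun"
    using left_inverse x(1) by blast
  note inv = inv_apply_DF_radial[OF this[unfolded x_def] z, folded x_def A_def]
  obtain T where "norming_functional cs T" "T u = 1"
    using norming_functional_exists[OF norm_u] by blast
  then obtain S where S: "support_functional cs x S"
    unfolding x_def using norm_u z(2) by (blast dest: norming_functional.support_functional_rotate)
  then have "norm x / S (inv_apply (DF x) (F x)) \<in> g_beta g \<beta> ` ball 0 1"
    using Mhat x unfolding Mhat_def by blast
  then have "norm x / S (cs (k z / A) x) \<in> g_beta g \<beta> ` ball 0 1"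
    by (simp only: inv(2))
  moreover have "norm x / S (cs (k z / A) x) = A / k z"
    using S x inv(1) unfolding support_functional_def by simp
  \<comment> \<open>if \<open>k z = 0\<close>, the quotient would be \<open>norm x / 0 = 0\<close>, which \<open>nonzero\<close> excludes\<close>
  ultimately show ?thesis
    using nonzero unfolding A_def by auto
qed

end

context complex_scaled
begin

lemma holomorphic_on_slice:
  assumes f: "holo_map cs (*) (ball 0 1) f" and u: "norm u = 1"
  shows "(\<lambda>z. f (cs z u)) holomorphic_on ball 0 1"
proof -
  have "(\<lambda>z. f (cs z u)) field_differentiable at z" if z: "z \<in> ball 0 1" for z
  proof -
    have "cs z u \<in> ball 0 1"
      using z u by (simp add: norm_cs)
    then obtain D where D: "(f has_derivative D) (at (cs z u))" and D_cs: "\<And>c v. D (cs c v) = c * D v"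
      using f unfolding holo_map_def by blast
    have "((\<lambda>z. cs z u) has_derivative (\<lambda>h. cs h u)) (at z)"
      by (rule cs.bounded_linear_left[THEN bounded_linear.has_derivative[OF _ has_derivative_ident]])
    from has_derivative_compose[OF this D]
    have "((\<lambda>z. f (cs z u)) has_derivative (\<lambda>h. h * D u)) (at z)"
      by (simp add: o_def D_cs)
    moreover have "(\<lambda>h. h * D u) = (*) (D u)"
      by (simp add: fun_eq_iff mult.commute)
    ultimately have "((\<lambda>z. f (cs z u)) has_derivative (*) (D u)) (at z)"
      by simp
    then show ?thesis
      unfolding field_differentiable_def has_field_derivative_def by blast
  qed
  then show ?thesis
    by (simp add: holomorphic_on_open field_differentiable_def)
qed

lemma radial_slice_of_admissible:
  assumes adm: "admissible cs g \<beta> F DF D2F D3" and u: "norm u = 1"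
  obtains k where "radial_slice cs F DF D2F D3 u k"
proof -
  obtain f where holo_F: "holo_map cs cs (ball 0 1) F" and holo_f: "holo_map cs (*) (ball 0 1) f"
    and F: "\<forall>x\<in>ball 0 1. F x = cs (f x) x"
    and DF: "\<forall>x\<in>ball 0 1. (F has_derivative DF x) (at x)"
    and D2F: "\<forall>x\<in>ball 0 1. (DF has_derivative D2F x) (at x)"
    and D3: "(D2F has_derivative D3) (at 0)"
    using adm unfolding admissible_def by (elim conjE exE) (rule that)
  have DF_cs: "DF x (cs a v) = cs a (DF x v)" if x: "x \<in> ball 0 1" for x a v
  proof -
    obtain D where "(F has_derivative D) (at x)" "\<And>c v. D (cs c v) = cs c (D v)"
      using holo_F x unfolding holo_map_def by blast
    with has_derivative_unique[OF _ DF[rule_format, OF x]] show ?thesis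
      by metis
  qed
  have "F (cs z u) = cs (z * f (cs z u)) u" if "z \<in> ball 0 1" for z
    using that u F by (simp add: norm_cs cs_mult cs_commute)
  with u holomorphic_on_slice[OF holo_f u] DF_cs DF D2F D3
  have "radial_slice cs F DF D2F D3 u (\<lambda>z. f (cs z u))"
    by unfold_locales blast+
  then show ?thesis ..
qed

end

context radial_slice
begin

lemma radial_relation_of_admissible:
  assumes DF0: "DF 0 = id_blinfun"
    and left_inverse: "\<And>x. x \<in> ball 0 1 \<Longrightarrow> \<exists>L. L o\<^sub>L DF x = id_blinfun"
    and Mhat: "Mhat cs g \<beta> (\<lambda>x. inv_apply (DF x) (F x))"
    and \<beta>: "\<bar>\<beta>\<bar> < pi / 2" and holg: "g holomorphic_on ball 0 1" and inj: "inj_on g (ball 0 1)"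
    and g0: "g 0 = 1" and Re_g: "\<And>z. z \<in> ball 0 1 \<Longrightarrow> Re (g z) > 0"
  obtains w where "w holomorphic_on ball 0 1" "w 0 = 0" "\<And>z. z \<in> ball 0 1 \<Longrightarrow> w z \<in> ball 0 1"
    and "\<And>z. z \<in> ball 0 1 \<Longrightarrow> k z + z * deriv k z = k z * g_beta g \<beta> (w z)"
proof -
  have k0: "k 0 = 1"
    using k_0_eq_1[OF DF0] .
  have g_beta_0: "g_beta g \<beta> 0 = 1"
    by (simp add: g_beta_spiral_factor g0)
  have nonzero: "0 \<notin> g_beta g \<beta> ` ball 0 1"
    using g_beta_nonzero[OF \<beta>] Re_g by fastforce
  have quotient: "k z \<noteq> 0 \<and> (k z + z * deriv k z) / k z \<in> g_beta g \<beta> ` ball 0 1"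
    if z: "z \<in> ball 0 1" for z
  proof (cases "z = 0")
    case True
    then show ?thesis
      using k0 g_beta_0 by force
  next
    case False
    then show ?thesis
      using radial_quotient_in_g_beta[OF left_inverse Mhat nonzero z] by blast
  qed
  then have k_nonzero: "k z \<noteq> 0" if "z \<in> ball 0 1" for z
    using that by blast
  define p where "p z = (k z + z * deriv k z) / k z" for z
  have "p holomorphic_on ball 0 1"
    unfolding p_def[abs_def] using k_nonzero
    by (intro holomorphic_intros holomorphic_k open_ball) auto
  moreover have "p z \<in> g_beta g \<beta> ` ball 0 1" if "z \<in> ball 0 1" for z
    using quotient[OF that] by (simp add: p_def)
  moreover have "p 0 = g_beta g \<beta> 0"
    by (simp add: p_def k0 g_beta_0)
  ultimately obtain w where "w holomorphic_on ball 0 1" "w 0 = 0" "\<And>z. z \<in> ball 0 1 \<Longrightarrow> w z \<in> ball 0 1"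
    and "\<And>z. z \<in> ball 0 1 \<Longrightarrow> p z = g_beta g \<beta> (w z)"
    using subordinate_to_univalent[OF _ holomorphic_g_beta[OF holg] inj_on_g_beta[OF \<beta> inj]] by metis
  with k_nonzero show ?thesis
    using that by (simp add: p_def field_simps)
qed

end

theorem admissible_Fekete_Szego_bound:
  assumes "complex_scaling cs" and \<beta>: "\<bar>\<beta>\<bar> < pi / 2"
    and holg: "g holomorphic_on ball 0 1" and inj: "inj_on g (ball 0 1)"
    and g0: "g 0 = 1" and Re_g: "\<forall>z\<in>ball 0 1. Re (g z) > 0"
    and adm: "admissible cs g \<beta> F DF D2F D3" and x: "x \<in> ball 0 1 - {0}"
  shows "norm (lhs_expr cs D2F D3 lam x) \<le> norm x ^ 3 / 2 * psi \<beta> g lam * cmod (deriv g 0)"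
proof -
  interpret complex_scaled cs
    by unfold_locales fact
  define u where "u = (1 / norm x) *\<^sub>R x"
  have u: "norm u = 1" and x_u: "x = norm x *\<^sub>R u"
    using x by (simp_all add: u_def)
  obtain k where "radial_slice cs F DF D2F D3 u k"
    using radial_slice_of_admissible[OF adm u] .
  then interpret radial_slice cs F DF D2F D3 u k .
  have DF0: "DF 0 = id_blinfun" and left_inverse: "\<And>x. x \<in> ball 0 1 \<Longrightarrow> \<exists>L. L o\<^sub>L DF x = id_blinfun"
    and Mhat: "Mhat cs g \<beta> (\<lambda>x. inv_apply (DF x) (F x))"
    using adm by (auto simp: admissible_def)
  obtain w where w: "w holomorphic_on ball 0 1" "w 0 = 0" "\<And>z. z \<in> ball 0 1 \<Longrightarrow> w z \<in> ball 0 1"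
    and rel: "\<And>z. z \<in> ball 0 1 \<Longrightarrow> k z + z * deriv k z = k z * g_beta g \<beta> (w z)"
    by (rule radial_relation_of_admissible[OF DF0 left_inverse Mhat \<beta> holg inj g0 Re_g[rule_format]]) auto
  note coeffs = coefficients_of_g_beta_relation[OF holomorphic_k k_0_eq_1[OF DF0]
      w holg g0 rel]
  have g'0: "deriv g 0 \<noteq> 0"
    using holomorphic_injective_imp_regular[OF holg open_ball inj] by simp
  have "cmod (deriv (deriv k) 0 / 2 - lam * (deriv k 0)\<^sup>2) \<le> 1 / 2 * psi \<beta> g lam * cmod (deriv g 0)"
    using norm_Fekete_Szego_le[OF \<beta> Schwarz_second_coefficient[OF w]]
    by (subst Fekete_Szego_factorization[OF g'0 coeffs])
  then have "norm x ^ 3 * cmod (deriv (deriv k) 0 / 2 - lam * (deriv k 0)\<^sup>2)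
      \<le> norm x ^ 3 * (1 / 2 * psi \<beta> g lam * cmod (deriv g 0))"
    by (rule mult_left_mono) simp
  then show ?thesis
    using norm_lhs_expr_slice[of "norm x" lam, folded x_u] by simp
qed

section \<open>Radial extremal mappings\<close>

lemma has_derivative_blinfun_exists:
  assumes "(f has_derivative D) F"
  shows "\<exists>L. (f has_derivative blinfun_apply L) F"
  using assms bounded_linear_Blinfun_apply[OF has_derivative_bounded_linear[OF assms]]
  by (intro exI[of _ "Blinfun D"]) simp

context norming_functional
begin

definition rank_one :: "'a \<Rightarrow> 'a \<Rightarrow>\<^sub>L 'a" where
  "rank_one = bounded_bilinear.prod_right (\<lambda>y v. cs (T v) y)"

lemma bounded_bilinear_rank_one: "bounded_bilinear (\<lambda>y v. cs (T v) y)"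
  using bounded_bilinear.flip[OF cs.comp1[OF bounded_linear_T]] .

lemma rank_one_apply [simp]: "rank_one y v = cs (T v) y"
  unfolding rank_one_def using bounded_bilinear.prod_right.rep_eq[OF bounded_bilinear_rank_one] by simp

lemma bounded_linear_rank_one: "bounded_linear rank_one"
  unfolding rank_one_def by (rule bounded_bilinear.bounded_linear_prod_right[OF bounded_bilinear_rank_one])

lemma rank_one_perturbation_compose:
  "(cs.prod_right a + rank_one y) o\<^sub>L (cs.prod_right b + rank_one y')
    = cs.prod_right (a * b) + rank_one (cs a y' + cs b y + cs (T y') y)"
  by (rule blinfun_eqI)
    (simp add: blinfun.add_left cs.add_right cs.add_left T.add T_cs cs_mult algebra_simps cs_commute)

lemma T_in_ball: "x \<in> ball 0 1 \<Longrightarrow> T x \<in> ball 0 1"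
  using norm_T_le[of x] by simp

lemma has_derivative_comp_T:
  assumes "\<phi> holomorphic_on ball 0 1" "x \<in> ball 0 1"
  shows "((\<lambda>x. \<phi> (T x)) has_derivative (\<lambda>h. deriv \<phi> (T x) * T h)) (at x)"
proof -
  have "(\<phi> has_derivative (*) (deriv \<phi> (T x))) (at (T x))"
    using holomorphic_derivI[OF assms(1) open_ball T_in_ball[OF assms(2)]]
    by (simp add: has_field_derivative_def)
  from has_derivative_compose[OF T.has_derivative[OF has_derivative_ident] this]
  show ?thesis by (simp add: o_def)
qed

definition radial_map :: "(complex \<Rightarrow> complex) \<Rightarrow> 'a \<Rightarrow> 'a" where
  "radial_map \<phi> x = cs (\<phi> (T x)) x"

definition radial_deriv :: "(complex \<Rightarrow> complex) \<Rightarrow> 'a \<Rightarrow> 'a \<Rightarrow>\<^sub>L 'a" where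
  "radial_deriv \<phi> x = cs.prod_right (\<phi> (T x)) + rank_one (radial_map (deriv \<phi>) x)"

(* Written with compositions by fixed bounded linear maps so that the chain rule gives its
   derivative. *)
definition radial_deriv2 :: "(complex \<Rightarrow> complex) \<Rightarrow> 'a \<Rightarrow> 'a \<Rightarrow>\<^sub>L 'a \<Rightarrow>\<^sub>L 'a" where
  "radial_deriv2 \<phi> x =
     (Blinfun cs.prod_right o\<^sub>L (blinfun_mult_right (deriv \<phi> (T x)) o\<^sub>L Blinfun T))
     + (Blinfun rank_one o\<^sub>L radial_deriv (deriv \<phi>) x)"

lemma radial_deriv_apply:
  "radial_deriv \<phi> x v = cs (\<phi> (T x)) v + cs (deriv \<phi> (T x) * T v) x"
  by (simp add: radial_deriv_def radial_map_def blinfun.add_left cs_mult cs_commute)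

lemma radial_deriv2_apply:
  "radial_deriv2 \<phi> x h = cs.prod_right (deriv \<phi> (T x) * T h) + rank_one (radial_deriv (deriv \<phi>) x h)"
  by (simp add: radial_deriv2_def blinfun.add_left bounded_linear_Blinfun_apply
      cs.bounded_linear_prod_right bounded_linear_rank_one bounded_linear_T)

lemma has_derivative_radial_map:
  assumes "\<phi> holomorphic_on ball 0 1" "x \<in> ball 0 1"
  shows "(radial_map \<phi> has_derivative radial_deriv \<phi> x) (at x)"
proof -
  have "(radial_map \<phi> has_derivative (\<lambda>h. cs (\<phi> (T x)) h + cs (deriv \<phi> (T x) * T h) x)) (at x)"
    unfolding radial_map_def[abs_def]
    using cs.FDERIV[OF has_derivative_comp_T[OF assms] has_derivative_ident] by simp
  moreover have "blinfun_apply (radial_deriv \<phi> x) = (\<lambda>h. cs (\<phi> (T x)) h + cs (deriv \<phi> (T x) * T h) x)"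
    by (rule ext) (rule radial_deriv_apply)
  ultimately show ?thesis
    by simp
qed

lemma has_derivative_radial_deriv:
  assumes hol: "\<phi> holomorphic_on ball 0 1" and x: "x \<in> ball 0 1"
  shows "(radial_deriv \<phi> has_derivative radial_deriv2 \<phi> x) (at x)"
proof -
  have hol': "deriv \<phi> holomorphic_on ball 0 1"
    using hol by (intro holomorphic_intros open_ball)
  have "((\<lambda>x. cs.prod_right (\<phi> (T x)) + rank_one (radial_map (deriv \<phi>) x)) has_derivative
      (\<lambda>h. cs.prod_right (deriv \<phi> (T x) * T h) + rank_one (radial_deriv (deriv \<phi>) x h))) (at x)"
    by (intro has_derivative_add bounded_linear.has_derivative[OF cs.bounded_linear_prod_right]
        bounded_linear.has_derivative[OF bounded_linear_rank_one]
        has_derivative_comp_T has_derivative_radial_map hol hol' x)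
  moreover have "blinfun_apply (radial_deriv2 \<phi> x) =
      (\<lambda>h. cs.prod_right (deriv \<phi> (T x) * T h) + rank_one (radial_deriv (deriv \<phi>) x h))"
    by (rule ext) (rule radial_deriv2_apply)
  ultimately show ?thesis
    by (simp add: radial_deriv_def[abs_def])
qed

lemma radial_deriv2_differentiable:
  assumes hol: "\<phi> holomorphic_on ball 0 1" and x: "x \<in> ball 0 1"
  obtains D3 where "(radial_deriv2 \<phi> has_derivative blinfun_apply D3) (at x)"
proof -
  have hol': "deriv \<phi> holomorphic_on ball 0 1"
    using hol by (intro holomorphic_intros open_ball)
  have bl: "bounded_linear (\<lambda>c. Blinfun cs.prod_right o\<^sub>L (blinfun_mult_right c o\<^sub>L Blinfun T))"
    by (intro bounded_linear_compose[OF bounded_bilinear.bounded_linear_right[OF bounded_bilinear_blinfun_compose]]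
        bounded_linear_compose[OF bounded_bilinear.bounded_linear_left[OF bounded_bilinear_blinfun_compose]]
        bounded_linear_blinfun_mult_right)
  have "((\<lambda>x. (Blinfun cs.prod_right o\<^sub>L (blinfun_mult_right (deriv \<phi> (T x)) o\<^sub>L Blinfun T))
      + (Blinfun rank_one o\<^sub>L radial_deriv (deriv \<phi>) x)) has_derivative
      (\<lambda>h. (Blinfun cs.prod_right o\<^sub>L (blinfun_mult_right (deriv (deriv \<phi>) (T x) * T h) o\<^sub>L Blinfun T))
        + (Blinfun rank_one o\<^sub>L radial_deriv2 (deriv \<phi>) x h))) (at x)"
    by (intro has_derivative_add bounded_linear.has_derivative[OF bl]
        bounded_linear.has_derivative[OF bounded_bilinear.bounded_linear_right[OF bounded_bilinear_blinfun_compose]]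
        has_derivative_comp_T has_derivative_radial_deriv hol' x)
  then have "(radial_deriv2 \<phi> has_derivative
      (\<lambda>h. (Blinfun cs.prod_right o\<^sub>L (blinfun_mult_right (deriv (deriv \<phi>) (T x) * T h) o\<^sub>L Blinfun T))
        + (Blinfun rank_one o\<^sub>L radial_deriv2 (deriv \<phi>) x h))) (at x)"
    by (simp add: radial_deriv2_def[abs_def])
  then show ?thesis
    by (rule has_derivative_blinfun_exists[THEN exE]) (rule that)
qed

lemma radial_deriv_cs: "radial_deriv \<phi> x (cs a v) = cs a (radial_deriv \<phi> x v)"
  by (simp add: radial_deriv_apply T_cs cs.add_right cs_mult[symmetric] ac_simps)

lemma holo_map_radial_map:
  assumes "\<phi> holomorphic_on ball 0 1"
  shows "holo_map cs cs (ball 0 1) (radial_map \<phi>)"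
  unfolding holo_map_def using assms has_derivative_radial_map radial_deriv_cs by blast

lemma holo_map_comp_T:
  assumes "\<phi> holomorphic_on ball 0 1"
  shows "holo_map cs (*) (ball 0 1) (\<lambda>x. \<phi> (T x))"
  unfolding holo_map_def using assms has_derivative_comp_T by (fastforce simp: T_cs)

lemma radial_deriv_0: "\<phi> 0 = 1 \<Longrightarrow> radial_deriv \<phi> 0 = id_blinfun"
  by (rule blinfun_eqI) (simp add: radial_deriv_apply T.zero cs.zero_right)

lemma radial_deriv_self: "radial_deriv \<phi> x (cs a x) = cs (a * (\<phi> (T x) + T x * deriv \<phi> (T x))) x"
  by (simp add: radial_deriv_apply T_cs cs_mult[symmetric] cs.add_left[symmetric] algebra_simps)

lemma radial_deriv_invertible:
  assumes a: "\<phi> (T x) \<noteq> 0" and A: "\<phi> (T x) + T x * deriv \<phi> (T x) \<noteq> 0"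
  defines "L \<equiv> cs.prod_right (1 / \<phi> (T x))
    - rank_one (cs (deriv \<phi> (T x) / \<phi> (T x) / (\<phi> (T x) + T x * deriv \<phi> (T x))) x)"
  shows "L o\<^sub>L radial_deriv \<phi> x = id_blinfun" and "radial_deriv \<phi> x o\<^sub>L L = id_blinfun"
proof -
  define b where "b = deriv \<phi> (T x)"
  define c where "c = b / \<phi> (T x) / (\<phi> (T x) + T x * b)"
  have D: "radial_deriv \<phi> x = cs.prod_right (\<phi> (T x)) + rank_one (cs b x)"
    by (simp add: radial_deriv_def radial_map_def b_def)
  have L: "L = cs.prod_right (1 / \<phi> (T x)) + rank_one (cs (- c) x)"
    by (rule blinfun_eqI) (simp add: L_def c_def b_def blinfun.diff_left blinfun.add_left cs.minus_left cs.minus_right)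
  have id: "id_blinfun = cs.prod_right 1 + rank_one 0"
    by (rule blinfun_eqI) (simp add: blinfun.add_left cs.zero_right)
  have "c * (\<phi> (T x) + T x * b) = b / \<phi> (T x)"
    using A by (simp add: c_def b_def)
  then show "L o\<^sub>L radial_deriv \<phi> x = id_blinfun" "radial_deriv \<phi> x o\<^sub>L L = id_blinfun"
    unfolding L D id rank_one_perturbation_compose using a
    by (simp_all add: T_cs cs_mult[symmetric] cs.add_left[symmetric] algebra_simps cs.zero_left)
qed

lemma inv_apply_radial_deriv:
  assumes "\<phi> (T x) \<noteq> 0" and "\<phi> (T x) + T x * deriv \<phi> (T x) \<noteq> 0"
  shows "inv_apply (radial_deriv \<phi> x) (radial_map \<phi> x)
    = cs (\<phi> (T x) / (\<phi> (T x) + T x * deriv \<phi> (T x))) x"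
  using radial_deriv_invertible[OF assms] assms(2)
  by (intro inv_apply_eqI) (auto simp: radial_deriv_self radial_map_def)

lemma Mhat_radial_map:
  assumes hol: "\<alpha> holomorphic_on ball 0 1"
    and in_g_beta: "\<And>z. z \<in> ball 0 1 \<Longrightarrow> 1 / \<alpha> z \<in> g_beta g \<beta> ` ball 0 1"
    and h: "\<And>x. x \<in> ball 0 1 \<Longrightarrow> h x = radial_map \<alpha> x"
  shows "Mhat cs g \<beta> h"
  unfolding Mhat_def
proof (intro conjI ballI allI impI)
  show "holo_map cs cs (ball 0 1) h"
    using holo_map_radial_map[OF hol] h has_derivative_transform_within_open[OF _ open_ball]
    unfolding holo_map_def by (metis (no_types, lifting))
  fix x S
  assume x: "x \<in> ball 0 1 - {0}" and "support_functional cs x S"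
  then have "S x = norm x" "S (cs a y) = a * S y" for a y
    unfolding support_functional_def by auto
  \<comment> \<open>this also holds when \<open>\<alpha> (T x) = 0\<close>, both sides being \<open>0\<close>\<close>
  with x have "norm x / S (h x) = 1 / \<alpha> (T x)"
    by (simp add: h radial_map_def)
  then show "norm x / S (h x) \<in> g_beta g \<beta> ` ball 0 1"
    using x in_g_beta T_in_ball by simp
qed

end

context norming_functional
begin

lemma radial_slice_radial_map:
  assumes "norm u = 1" "T u = 1" and holK: "K holomorphic_on ball 0 1"
    and "(radial_deriv2 K has_derivative blinfun_apply D3) (at 0)"
  shows "radial_slice cs (radial_map K) (radial_deriv K) (radial_deriv2 K) D3 u K"
proof unfold_locales
  show "radial_map K (cs z u) = cs (z * K z) u" for z
    using assms by (simp add: radial_map_def T_cs cs_mult[symmetric] mult.commute)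
qed (use assms in \<open>auto intro: has_derivative_radial_map has_derivative_radial_deriv radial_deriv_cs\<close>)

lemma admissible_radial_map:
  assumes holK: "K holomorphic_on ball 0 1" and K0: "K 0 = 1"
    and K_nonzero: "\<And>z. z \<in> ball 0 1 \<Longrightarrow> K z \<noteq> 0"
    and rel: "\<And>z. z \<in> ball 0 1 \<Longrightarrow> K z + z * deriv K z = K z * g_beta g \<beta> (w z)"
    and w_in: "\<And>z. z \<in> ball 0 1 \<Longrightarrow> w z \<in> ball 0 1"
    and nonzero: "0 \<notin> g_beta g \<beta> ` ball 0 1"
    and D3: "(radial_deriv2 K has_derivative blinfun_apply D3) (at 0)"
  shows "admissible cs g \<beta> (radial_map K) (radial_deriv K) (radial_deriv2 K) D3"
proof -
  have A: "K z + z * deriv K z \<noteq> 0" if "z \<in> ball 0 1" for z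
    using rel[OF that] K_nonzero[OF that] nonzero w_in[OF that] by auto
  define \<alpha> where "\<alpha> z = K z / (K z + z * deriv K z)" for z
  have "\<alpha> holomorphic_on ball 0 1"
    unfolding \<alpha>_def[abs_def] using A by (intro holomorphic_intros holK open_ball) auto
  moreover have "1 / \<alpha> z \<in> g_beta g \<beta> ` ball 0 1" if "z \<in> ball 0 1" for z
    using rel[OF that] K_nonzero[OF that] w_in[OF that] by (simp add: \<alpha>_def)
  moreover have "inv_apply (radial_deriv K x) (radial_map K x) = radial_map \<alpha> x" if "x \<in> ball 0 1" for x
    using inv_apply_radial_deriv K_nonzero A T_in_ball[OF that]
    by (simp add: \<alpha>_def radial_map_def mult.commute)
  ultimately have "Mhat cs g \<beta> (\<lambda>x. inv_apply (radial_deriv K x) (radial_map K x))"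
    by (rule Mhat_radial_map)
  moreover have "\<exists>L. L o\<^sub>L radial_deriv K x = id_blinfun \<and> radial_deriv K x o\<^sub>L L = id_blinfun"
    if "x \<in> ball 0 1" for x
    using radial_deriv_invertible K_nonzero A T_in_ball[OF that] by (metis mult.commute)
  moreover have "\<forall>x\<in>ball 0 1. radial_map K x = cs (K (T x)) x"
    by (simp add: radial_map_def)
  ultimately show ?thesis
    unfolding admissible_def
    using holo_map_radial_map[OF holK] holo_map_comp_T[OF holK] has_derivative_radial_map[OF holK]
      radial_deriv_0[of K, OF K0] has_derivative_radial_deriv[OF holK] D3
    by (auto simp: radial_map_def T.zero cs.zero_right)
qed

lemma extremal_radial_map:
  assumes \<beta>: "\<bar>\<beta>\<bar> < pi / 2" and holg: "g holomorphic_on ball 0 1" and g0: "g 0 = 1"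
    and Re_g: "\<forall>z\<in>ball 0 1. Re (g z) > 0"
    and w: "w holomorphic_on ball 0 1" "w 0 = 0" "\<And>z. z \<in> ball 0 1 \<Longrightarrow> w z \<in> ball 0 1"
  obtains K D3 where "admissible cs g \<beta> (radial_map K) (radial_deriv K) (radial_deriv2 K) D3"
    and "K holomorphic_on ball 0 1" "K 0 = 1" "(radial_deriv2 K has_derivative blinfun_apply D3) (at 0)"
    and "\<And>z. z \<in> ball 0 1 \<Longrightarrow> K z + z * deriv K z = K z * g_beta g \<beta> (w z)"
proof -
  have "w ` ball 0 1 \<subseteq> ball 0 1"
    using w(3) by blast
  then have "(\<lambda>z. g_beta g \<beta> (w z)) holomorphic_on ball 0 1"
    using holomorphic_on_compose_gen[OF w(1) holomorphic_g_beta[OF holg]] by (simp add: o_def)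
  moreover have "g_beta g \<beta> (w 0) = 1"
    by (simp add: g_beta_spiral_factor w(2) g0)
  ultimately obtain K where K: "K holomorphic_on ball 0 1" "K 0 = 1" "\<And>z. z \<in> ball 0 1 \<Longrightarrow> K z \<noteq> 0"
    and rel: "\<And>z. z \<in> ball 0 1 \<Longrightarrow> K z + z * deriv K z = K z * g_beta g \<beta> (w z)"
    by (rule radial_relation_solvable) (rule that)
  obtain D3 where D3: "(radial_deriv2 K has_derivative blinfun_apply D3) (at 0)"
    using radial_deriv2_differentiable[OF K(1), of 0] by auto
  have "0 \<notin> g_beta g \<beta> ` ball 0 1"
    using g_beta_nonzero[OF \<beta>] Re_g by fastforce
  note adm = admissible_radial_map[OF K rel w(3) this D3]
  show ?thesis
    by (rule that[OF adm K(1,2) D3 rel])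
qed

end

theorem admissible_Fekete_Szego_sharp:
  assumes "complex_scaling cs" and \<beta>: "\<bar>\<beta>\<bar> < pi / 2"
    and holg: "g holomorphic_on ball 0 1" and inj: "inj_on g (ball 0 1)"
    and g0: "g 0 = 1" and Re_g: "\<forall>z\<in>ball 0 1. Re (g z) > 0"
    and "x0 \<noteq> (0::'a::banach)" and c: "c < psi \<beta> g lam * cmod (deriv g 0) / 2"
  shows "\<exists>F DF D2F D3 x. admissible cs g \<beta> F DF D2F D3 \<and> x \<in> ball (0::'a) 1 - {0} \<and>
           norm (lhs_expr cs D2F D3 lam x) > c * norm x ^ 3"
proof -
  interpret complex_scaled cs
    by unfold_locales fact
  define u where "u = (1 / norm x0) *\<^sub>R x0"
  have u: "norm u = 1"
    using \<open>x0 \<noteq> 0\<close> by (simp add: u_def)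
  obtain T where T: "norming_functional cs T" and Tu: "T u = 1"
    using norming_functional_exists[OF u] .
  interpret norming_functional cs T
    by (fact T)
  obtain w where w: "w holomorphic_on ball 0 1" "w 0 = 0" "\<And>z. z \<in> ball 0 1 \<Longrightarrow> w z \<in> ball 0 1"
    and extremal: "cmod (deriv (deriv w) 0 / 2 + (deriv w 0)\<^sup>2 * fs_multiplier \<beta> g lam)
      = max 1 (cmod (fs_multiplier \<beta> g lam))"
    by (rule extremal_Schwarz_function[of "fs_multiplier \<beta> g lam"]) (rule that)
  obtain K D3 where adm: "admissible cs g \<beta> (radial_map K) (radial_deriv K) (radial_deriv2 K) D3"
    and K: "K holomorphic_on ball 0 1" "K 0 = 1" and D3: "(radial_deriv2 K has_derivative D3) (at 0)"
    and rel: "\<And>z. z \<in> ball 0 1 \<Longrightarrow> K z + z * deriv K z = K z * g_beta g \<beta> (w z)"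
    using extremal_radial_map[OF \<beta> holg g0 Re_g w] by blast
  interpret radial_slice cs "radial_map K" "radial_deriv K" "radial_deriv2 K" D3 u K
    using radial_slice_radial_map[OF u Tu K(1) D3] .
  have "deriv g 0 \<noteq> 0"
    using holomorphic_injective_imp_regular[OF holg open_ball inj] by simp
  then have "cmod (deriv (deriv K) 0 / 2 - lam * (deriv K 0)\<^sup>2) = 1 / 2 * psi \<beta> g lam * cmod (deriv g 0)"
    using norm_Fekete_Szego_eq[OF \<beta> extremal]
    by (subst Fekete_Szego_factorization[OF _ coefficients_of_g_beta_relation[OF K w holg g0 rel]])
  then have "norm (lhs_expr cs (radial_deriv2 K) D3 lam ((1 / 2) *\<^sub>R u)) > c * norm ((1 / 2) *\<^sub>R u) ^ 3"
    using norm_lhs_expr_slice[of "1 / 2" lam] c u by simp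
  moreover have "(1 / 2) *\<^sub>R u \<in> ball 0 1 - {0}"
    using u by auto
  ultimately show ?thesis
    using adm by blast
qed

theorem theorem2:
  fixes cs :: "complex \<Rightarrow> 'a::banach \<Rightarrow> 'a" and \<beta> :: real and g :: "complex \<Rightarrow> complex"
  assumes "complex_scaling cs"
    and "\<bar>\<beta>\<bar> < pi / 2"
    and "g holomorphic_on ball 0 1" and "inj_on g (ball 0 1)"
    and "g 0 = 1" and "\<forall>z\<in>ball 0 1. Re (g z) > 0"
  shows "(\<forall>F DF D2F D3. admissible cs g \<beta> F DF D2F D3 \<longrightarrow>
            (\<forall>lam. \<forall>x\<in>ball (0::'a) 1 - {0}.
               norm (lhs_expr cs D2F D3 lam x) \<le> norm x ^ 3 / 2 * psi \<beta> g lam * cmod (deriv g 0)))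
       \<and> ((\<exists>x::'a. x \<noteq> 0) \<longrightarrow>
            (\<forall>lam c. c < psi \<beta> g lam * cmod (deriv g 0) / 2 \<longrightarrow>
               (\<exists>F DF D2F D3 x. admissible cs g \<beta> F DF D2F D3 \<and> x \<in> ball (0::'a) 1 - {0} \<and>
                  norm (lhs_expr cs D2F D3 lam x) > c * norm x ^ 3)))"
proof (intro conjI allI impI ballI)
  fix F DF D2F D3 lam x
  assume "admissible cs g \<beta> F DF D2F D3" "x \<in> ball (0::'a) 1 - {0}"
  then show "norm (lhs_expr cs D2F D3 lam x) \<le> norm x ^ 3 / 2 * psi \<beta> g lam * cmod (deriv g 0)"
    by (rule admissible_Fekete_Szego_bound[OF assms])
next
  fix lam c
  assume "\<exists>x::'a. x \<noteq> 0" "c < psi \<beta> g lam * cmod (deriv g 0) / 2"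
  then show "\<exists>F DF D2F D3 x. admissible cs g \<beta> F DF D2F D3 \<and> x \<in> ball (0::'a) 1 - {0} \<and>
      norm (lhs_expr cs D2F D3 lam x) > c * norm x ^ 3"
    using admissible_Fekete_Szego_sharp[OF assms] by blast
qed

end
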